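(* Let $I_{-1}:=\iint_T\frac{dx\,dy}{xy(-\ln xy)}$ and, for $n\ge0$, $I_n:=\iint_T \frac{(-\ln xy)^n}{xy}\,dx\,dy$. Then \[ I_{-1}=\sum_{n=0}^\infty(-1)^n\frac{I_n}{(n+1)!}+\int_0^1\frac{\operatorname{li}(x-x^2)}{x}\,dx+1, \] where the series converges.
   Context: $T:=\{(x,y)\in[0,1]^2 : x+y\ge 1\}$. The logarithmic integral is $\operatorname{li}(u):=\int_0^u\frac{dv}{\ln v}$ for $0<u<1$. *)

theory Defs
  imports "HOL-Analysis.Analysis"
begin

definition T_set :: "(real \<times> real) set" where
  "T_set = {(x, y). 0 \<le> x \<and> x \<le> 1 \<and> 0 \<le> y \<and> y \<le> 1 \<and> x + y \<ge> 1}"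

text \<open>Logarithmic integral li(u) = int_0^u dv / ln v (meant for 0 < u < 1).\<close>
definition li :: "real \<Rightarrow> real" where
  "li u = (LBINT v=0..u. 1 / ln v)"

definition f_neg1 :: "real \<times> real \<Rightarrow> real" where
  "f_neg1 = (\<lambda>(x, y). 1 / (x * y * (- ln (x * y))))"

definition f_n :: "nat \<Rightarrow> real \<times> real \<Rightarrow> real" where
  "f_n n = (\<lambda>(x, y). (- ln (x * y)) ^ n / (x * y))"

definition I_neg1 :: real where
  "I_neg1 = (LINT z:T_set|lborel. f_neg1 z)"

definition I_n :: "nat \<Rightarrow> real" where
  "I_n n = (LINT z:T_set|lborel. f_n n z)"

end

theory Submission imports Defs "HOL-Probability.Distributions" begin

(*
  Write L(x,y) = -ln (x y).  The integrals I_n and I_{-1} are integrals of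
  functions of L against the measure dx dy / (x y) on T.  The image of this measure under L has
  an explicit density W_T on (0, oo):  for fixed t > 0 the y-integral is computed by the
  substitution u = ln (x y), and the remaining x-integral is the dx/x-measure of
  {x : e^-t <= x, x (1 - x) <= e^-t}, which is a union of at most two intervals.  Hence
      I_n = int W_T(t) t^n dt,    I_{-1} = int W_T(t) / t dt,
      int W_T(t) e^-t / t dt = 1 + int_0^1 li(x - x^2) / x dx,
  the last one by a second computation on T involving the logarithmic integral.
  The series cannot be summed under the integral by dominated convergence, since
  W_T(t) ~ 2 e^-t and the partial sums of e^-t grow like e^t.  We therefore split
  W_T(t)/t = m(t) + r(t) with the explicit main part m(t) = 2 (e^-t - e^-2t) / t and a rest
  r(t) = O(e^-2t): the rest is handled by dominated convergence, while for the main part the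
  Laplace representation m(t) = int_1^2 2 e^-st ds turns the partial sums into a geometric
  series in -1/s, which converges for s in (1, 2].
*)

lemma integrable_integral_from_nn_integral:
  fixes f :: "'a \<Rightarrow> real"
  assumes [measurable]: "f \<in> borel_measurable M" and nn: "\<And>x. 0 \<le> f x"
    and eq: "(\<integral>\<^sup>+x. ennreal (f x) \<partial>M) = ennreal r" and r: "0 \<le> r"
  shows "integrable M f" "integral\<^sup>L M f = r"
proof -
  show i: "integrable M f" by (rule integrableI_nonneg) (use nn eq in auto)
  have "ennreal (integral\<^sup>L M f) = ennreal r"
    using nn_integral_eq_integral[OF i] nn eq by simp
  moreover have "0 \<le> integral\<^sup>L M f" using nn by (simp add: integral_nonneg_AE)
  ultimately show "integral\<^sup>L M f = r" using r by simp
qed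

lemma integrable_integral_from_nn_integral_eq:
  fixes f g :: "real \<Rightarrow> real"
  assumes [measurable]: "f \<in> borel_measurable borel" and fn: "\<And>x. 0 \<le> f x" and gn: "\<And>x. 0 \<le> g x"
    and eq: "(\<integral>\<^sup>+x. ennreal (f x) \<partial>lborel) = (\<integral>\<^sup>+x. ennreal (g x) \<partial>lborel)"
    and gi: "integrable lborel g"
  shows "integrable lborel f" "integral\<^sup>L lborel f = integral\<^sup>L lborel g"
proof -
  have e: "(\<integral>\<^sup>+x. ennreal (f x) \<partial>lborel) = ennreal (integral\<^sup>L lborel g)"
    unfolding eq by (rule nn_integral_eq_integral[OF gi]) (use gn in auto)
  have "0 \<le> integral\<^sup>L lborel g" using gn by (simp add: integral_nonneg_AE)
  then show "integrable lborel f" "integral\<^sup>L lborel f = integral\<^sup>L lborel g"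
    using integrable_integral_from_nn_integral[OF _ fn e] by auto
qed

lemma integrable_bounded_on_Icc:
  fixes h :: "real \<Rightarrow> real"
  assumes [measurable]: "h \<in> borel_measurable borel" and b: "\<And>s. s \<in> {a..b} \<Longrightarrow> \<bar>h s\<bar> \<le> B"
  shows "integrable lborel (\<lambda>s. indicator {a..b} s * h s)"
proof -
  have "integrable lborel (\<lambda>s. indicator {a..b} s *\<^sub>R h s)"
    by (rule integrableI_bounded_set_indicator[where B = B]) (use b in \<open>auto simp: emeasure_lborel_Icc_eq\<close>)
  then show ?thesis by simp
qed

lemma nn_integral_inverse_Icc:
  fixes a b :: real assumes "0 < a" "a \<le> b"
  shows "(\<integral>\<^sup>+x. ennreal (indicator {a..b} x / x) \<partial>lborel) = ennreal (ln b - ln a)"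
proof -
  have "((\<lambda>x. 1 / x) has_integral (ln b - ln a)) {a..b}"
  proof (rule fundamental_theorem_of_calculus[OF assms(2)])
    fix x assume "x \<in> {a..b}"
    then have "x > 0" using assms by auto
    then show "(ln has_vector_derivative 1 / x) (at x within {a..b})"
      by (auto intro!: derivative_eq_intros simp: has_real_derivative_iff_has_vector_derivative[symmetric])
  qed
  then have "integral\<^sup>N lborel (\<lambda>x. indicator {a..b} x * (1 / x)) = ennreal (ln b - ln a)"
    by (intro nn_integral_has_integral_lebesgue) (use assms in auto)
  then show ?thesis by (simp add: divide_inverse)
qed

(* The Gamma integral int_0^oo t^k e^(-a t) dt = k! / a^(k+1), by rescaling the case a = 1. *)
lemma nn_integral_power_exp:
  fixes a :: real assumes a: "0 < a"
  shows "(\<integral>\<^sup>+t. ennreal (indicator {0..} t * t^k * exp (- a * t)) \<partial>lborel) = ennreal (fact k / a^(k+1))"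
proof -
  define X where "X = (\<integral>\<^sup>+t. ennreal (indicator {0..} t * t^k * exp (- a * t)) \<partial>lborel)"
  have scale: "ennreal ((0 + a * x)^k * exp (-(0 + a * x))) * indicator {0 ..} (0 + a * x) =
          ennreal (a^k) * ennreal (indicator {0..} x * x^k * exp (- a * x))" for x
    using a by (cases "0 \<le> x") (auto simp: indicator_def ennreal_mult'[symmetric] power_mult_distrib zero_le_mult_iff)
  have "ennreal (fact k) = (\<integral>\<^sup>+x. ennreal (x^k * exp (-x)) * indicator {0 ..} x \<partial>lborel)"
    using nn_intergal_power_times_exp_Ici[of k] by simp
  also have "\<dots> = ennreal \<bar>a\<bar> * (\<integral>\<^sup>+x. ennreal ((0 + a * x)^k * exp (-(0 + a * x))) * indicator {0 ..} (0 + a * x) \<partial>lborel)"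
    by (rule nn_integral_real_affine) (use a in auto)
  also have "\<dots> = ennreal a * (ennreal (a^k) * X)"
    unfolding scale using a by (subst nn_integral_cmult) (auto simp: X_def)
  also have "\<dots> = ennreal (a^(k+1)) * X"
    using a by (simp add: ennreal_mult mult.assoc)
  finally have e: "ennreal (fact k) = ennreal (a^(k+1)) * X" .
  have inv1: "ennreal (inverse (a^(k+1))) * ennreal (a^(k+1)) = 1"
    using a by (subst ennreal_mult[symmetric]) (auto simp: field_simps)
  have "X = ennreal (inverse (a^(k+1))) * (ennreal (a^(k+1)) * X)"
    by (simp only: mult.assoc[symmetric] inv1) simp
  also have "\<dots> = ennreal (inverse (a^(k+1)) * fact k)"
    using a by (simp only: e[symmetric] ennreal_mult'[symmetric] inverse_nonnegative_iff_nonnegative zero_le_power less_imp_le)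
  finally show ?thesis by (simp add: X_def field_simps)
qed

lemma integrable_power_exp: "integrable lborel (\<lambda>t::real. indicator {0..} t * t^k * exp (- t))"
proof -
  have "integrable lborel (\<lambda>t::real. indicator {0..} t * t^k * exp (- 1 * t))"
    by (rule integrable_integral_from_nn_integral(1)[OF _ _ nn_integral_power_exp[of 1 k]])
       (auto simp: indicator_def)
  then show ?thesis by simp
qed

text \<open>The density of the push-forward of dx dy/(xy) on T under (x,y) \<mapsto> -ln(xy).\<close>

(* For t > 0 this is the dx/x-measure of {x : e^-t <= x, x - x^2 <= e^-t} (lemma W_T_slice):
   the whole interval [e^-t, 1] if e^-t >= 1/4, otherwise [e^-t, r1] \<union> [r2, 1] with r1, r2
   the roots of x - x^2 = e^-t. *)
definition W_T :: "real \<Rightarrow> real" where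
  "W_T t = (if t \<le> 0 then 0 else if 1/4 \<le> exp (-t) then t
           else 2 * ln (2 / (1 + sqrt (1 - 4 * exp (-t)))))"

lemma W_T_borel[measurable]: "W_T \<in> borel_measurable borel"
  unfolding W_T_def by measurable

lemma quadratic_sublevel_iff:
  fixes s x :: real
  assumes "0 < 1 - 4 * s"
  shows "x - x^2 \<le> s \<longleftrightarrow> x \<le> (1 - sqrt (1 - 4 * s)) / 2 \<or> (1 + sqrt (1 - 4 * s)) / 2 \<le> x"
proof -
  define q where "q = sqrt (1 - 4 * s)"
  have q0: "0 < q" using assms by (simp add: q_def)
  have "s = (1 - q^2) / 4" using assms by (simp add: q_def)
  then have "x - x^2 - s = - ((x - (1 - q) / 2) * (x - (1 + q) / 2))"
    by (simp add: power2_eq_square field_simps)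
  then have "x - x^2 \<le> s \<longleftrightarrow> 0 \<le> (x - (1 - q) / 2) * (x - (1 + q) / 2)" by linarith
  also have "\<dots> \<longleftrightarrow> x \<le> (1 - q) / 2 \<or> (1 + q) / 2 \<le> x" using q0
    by (auto simp: zero_le_mult_iff)
  finally show ?thesis by (simp add: q_def)
qed

lemma W_T_slice:
  fixes t :: real assumes t: "t > 0"
  shows "(\<integral>\<^sup>+x. ennreal (indicator {x. 0 < x \<and> x < 1 \<and> x - x^2 \<le> exp (-t) \<and> exp (-t) \<le> x} x / x) \<partial>lborel)
         = ennreal (W_T t)"
proof -
  define s where "s = exp (-t)"
  have s0: "0 < s" and s1: "s < 1" using t by (auto simp: s_def)
  let ?S = "{x. 0 < x \<and> x < 1 \<and> x - x^2 \<le> s \<and> s \<le> x}"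
  show ?thesis
  proof (cases "1/4 \<le> s")
    case True
    have q: "x - x^2 \<le> s" for x :: real
    proof -
      have "x - x^2 \<le> 1/4" using sum_squares_ge_zero[of "x - 1/2" 0] by (simp add: power2_eq_square algebra_simps)
      then show ?thesis using True by linarith
    qed
    have ae: "AE x in lborel. indicator ?S x = (indicator {s..1} x :: real)"
      using AE_lborel_singleton[of 1] by eventually_elim (use q s0 in \<open>auto simp: indicator_def\<close>)
    have "(\<integral>\<^sup>+x. ennreal (indicator ?S x / x) \<partial>lborel) = (\<integral>\<^sup>+x. ennreal (indicator {s..1} x / x) \<partial>lborel)"
      by (rule nn_integral_cong_AE) (use ae in auto)
    also have "\<dots> = ennreal (- ln s)" using nn_integral_inverse_Icc[OF s0] s1 by simp
    also have "- ln s = W_T t" using True t by (simp add: W_T_def s_def)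
    finally show ?thesis by (simp add: s_def)
  next
    case False
    define q where "q = sqrt (1 - 4 * s)"
    have q0: "0 < q" and q1: "q < 1" using False s0 by (auto simp: q_def real_sqrt_lt_1_iff)
    have qq: "q^2 = 1 - 4 * s" using False by (simp add: q_def)
    define r1 where "r1 = (1 - q) / 2"
    define r2 where "r2 = (1 + q) / 2"
    have r1': "r1 = 2 * s / (1 + q)"
    proof -
      have "(1 - q) * (1 + q) = 4 * s" using qq by (simp add: power2_eq_square algebra_simps)
      then show ?thesis unfolding r1_def using q0 by (simp add: field_simps)
    qed
    have sr1: "s \<le> r1"
    proof -
      have "s * (1 + q) \<le> 2 * s" using q1 s0 by (simp add: algebra_simps)
      then show ?thesis unfolding r1' using q0 by (simp add: pos_le_divide_eq)
    qed
    have r12: "r1 < r2" using q0 by (simp add: r1_def r2_def)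
    have r21: "r2 < 1" using q1 by (simp add: r2_def)
    have roots: "x - x^2 \<le> s \<longleftrightarrow> x \<le> r1 \<or> r2 \<le> x" for x :: real
      using quadratic_sublevel_iff[of s x] False by (simp add: r1_def r2_def q_def)
    have ae: "AE x in lborel. ennreal (indicator ?S x / x) = ennreal (indicator {s..r1} x / x) + ennreal (indicator {r2..1} x / x)"
      using AE_lborel_singleton[of 1] proof eventually_elim
      case (elim x)
      show ?case
      proof (cases "x \<in> ?S")
        case True
        then have "x \<in> {s..r1} \<and> x \<notin> {r2..1} \<or> x \<notin> {s..r1} \<and> x \<in> {r2..1}"
          using roots[of x] r12 by auto
        then show ?thesis using True by (auto simp: indicator_def)
      next
        case False
        then have "x \<notin> {s..r1} \<and> x \<notin> {r2..1}" using roots[of x] elim s0 sr1 r12 r21 by auto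
        then show ?thesis using False by (auto simp: indicator_def)
      qed
    qed
    have "(\<integral>\<^sup>+x. ennreal (indicator ?S x / x) \<partial>lborel)
        = (\<integral>\<^sup>+x. ennreal (indicator {s..r1} x / x) \<partial>lborel) + (\<integral>\<^sup>+x. ennreal (indicator {r2..1} x / x) \<partial>lborel)"
      by (subst nn_integral_cong_AE[OF ae]) (rule nn_integral_add; auto)
    also have "\<dots> = ennreal ((ln r1 - ln s) + (ln 1 - ln r2))"
      using nn_integral_inverse_Icc[OF s0 sr1] nn_integral_inverse_Icc[of r2 1] r21 r12 sr1 s0
      by (simp add: ennreal_plus[symmetric])
    also have "(ln r1 - ln s) + (ln 1 - ln r2) = W_T t"
    proof -
      have "ln r1 = ln 2 + ln s - ln (1 + q)" unfolding r1' using s0 q0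
        by (simp add: ln_div ln_mult)
      moreover have "ln r2 = ln (1 + q) - ln 2" unfolding r2_def using q0 by (simp add: ln_div)
      moreover have "W_T t = 2 * (ln 2 - ln (1 + q))" using False t q0
        by (simp add: W_T_def s_def[symmetric] q_def[symmetric] ln_div)
      ultimately show ?thesis by simp
    qed
    finally show ?thesis by (simp add: s_def)
  qed
qed

lemma W_T_nonneg: "0 \<le> W_T t"
proof -
  have "0 \<le> 2 * ln (2 / (1 + sqrt (1 - 4 * exp (-t))))" if "\<not> 1/4 \<le> exp (-t)"
  proof -
    have "sqrt (1 - 4 * exp (-t)) \<le> 1" using that by (simp add: real_sqrt_le_1_iff)
    moreover have "0 \<le> sqrt (1 - 4 * exp (-t))" using that by simp
    ultimately have "1 \<le> 2 / (1 + sqrt (1 - 4 * exp (-t)))" by (simp add: le_divide_eq_1 add_pos_nonneg)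
    then show ?thesis by simp
  qed
  then show ?thesis by (auto simp: W_T_def)
qed

(* Numerical bounds on ln 4, used to locate the threshold e^-t = 1/4 in the definition of W_T. *)
lemma ln_4_bounds: "1 \<le> ln (4::real)" "ln (4::real) \<le> 2"
proof -
  have "exp 1 \<le> (4::real)" using exp_le by simp
  then have "ln (exp 1) \<le> ln (4::real)" by (subst ln_le_cancel_iff) auto
  then show "1 \<le> ln (4::real)" by simp
  have "ln (4::real) = 2 * ln 2" using ln_realpow[of 2 2] by simp
  also have "ln (2::real) \<le> 1" using ln_le_minus_one[of 2] by simp
  finally show "ln (4::real) \<le> 2" by simp
qed

lemma W_T_le: "W_T t \<le> max t 0"
proof -
  have "2 * ln (2 / (1 + sqrt (1 - 4 * exp (-t)))) \<le> t" if "\<not> 1/4 \<le> exp (-t)"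
  proof -
    have "0 \<le> sqrt (1 - 4 * exp (-t))" using that by simp
    then have "2 / (1 + sqrt (1 - 4 * exp (-t))) \<le> 2" by (simp add: divide_le_eq add_pos_nonneg)
    then have "ln (2 / (1 + sqrt (1 - 4 * exp (-t)))) \<le> ln 2"
      using \<open>0 \<le> sqrt _\<close> by (subst ln_le_cancel_iff) (auto simp: add_pos_nonneg)
    moreover have "ln 4 < t"
    proof -
      have "ln (exp (-t)) < ln (1/4)" using that by (subst ln_less_cancel_iff) auto
      then show ?thesis by (simp add: ln_div)
    qed
    moreover have "ln (4::real) = 2 * ln 2" using ln_realpow[of 2 2] by simp
    ultimately show ?thesis by linarith
  qed
  then show ?thesis by (auto simp: W_T_def)
qed

lemma W_T_div_bounds: "0 \<le> W_T t / t" "W_T t / t \<le> 1"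
proof -
  show "0 \<le> W_T t / t" using W_T_nonneg[of t] by (cases "t \<le> 0") (auto simp: W_T_def)
  show "W_T t / t \<le> 1" using W_T_le[of t] W_T_nonneg[of t] by (cases "t \<le> 0") (auto simp: W_T_def divide_le_eq)
qed

lemma W_T_le_exp: "W_T t \<le> 8 * exp (-t)"
proof (cases "t \<le> 0")
  case True then show ?thesis by (simp add: W_T_def)
next
  case False
  show ?thesis
  proof (cases "1/4 \<le> exp (-t)")
    case True
    have "t \<le> ln 4"
    proof -
      have "ln (1/4) \<le> ln (exp (-t))" using True by (subst ln_le_cancel_iff) auto
      then show ?thesis by (simp add: ln_div)
    qed
    then show ?thesis using True False ln_4_bounds(2) by (simp add: W_T_def)
  next
    case nq: False
    define s where "s = exp (-t)"
    define q where "q = sqrt (1 - 4 * s)"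
    have s0: "0 < s" by (simp add: s_def)
    have q0: "0 \<le> q" and q1: "q \<le> 1" using nq by (auto simp: q_def s_def)
    have qq: "q^2 = 1 - 4 * s" using nq by (simp add: q_def s_def)
    have "ln (2 / (1 + q)) \<le> 2 / (1 + q) - 1" using q0 by (intro ln_le_minus_one) (auto simp: add_pos_nonneg)
    also have "\<dots> = (1 - q) / (1 + q)" using q0 by (simp add: field_simps)
    also have "\<dots> = 4 * s / (1 + q)^2"
    proof -
      have "(1 - q) * (1 + q) = 4 * s" using qq by (simp add: power2_eq_square algebra_simps)
      moreover have "(1 - q) / (1 + q) = ((1 - q) * (1 + q)) / ((1 + q) * (1 + q))" using q0 by simp
      ultimately show ?thesis by (simp add: power2_eq_square)
    qed
    also have "\<dots> \<le> 4 * s"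
    proof -
      have "1 \<le> (1 + q)^2" using q0 by (simp add: power2_eq_square algebra_simps)
      then show ?thesis using s0 by (simp add: divide_le_eq mult_le_cancel_left1)
    qed
    finally show ?thesis using False nq by (simp add: W_T_def s_def q_def)
  qed
qed

lemma neg_ln_one_minus_bounds:
  fixes u :: real assumes uh: "u \<le> 1/2"
  shows "u \<le> - ln (1 - u)" and "- ln (1 - u) \<le> u + 2 * u^2"
proof -
  show "u \<le> - ln (1 - u)" using ln_le_minus_one[of "1 - u"] uh by simp
  have "- ln (1 - u) \<le> u / (1 - u)"
  proof -
    have "ln (1 / (1 - u)) \<le> 1 / (1 - u) - 1" using uh by (intro ln_le_minus_one) auto
    moreover have "ln (1 / (1 - u)) = - ln (1 - u)" using uh by (simp add: ln_div)
    moreover have "1 / (1 - u) - 1 = u / (1 - u)" using uh by (simp add: field_simps)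
    ultimately show ?thesis by simp
  qed
  moreover have "u / (1 - u) - u \<le> 2 * u^2"
  proof -
    have "u / (1 - u) - u = u^2 / (1 - u)" using uh by (simp add: field_simps power2_eq_square)
    also have "\<dots> \<le> u^2 / (1/2)" using uh by (intro divide_left_mono) auto
    finally show ?thesis by simp
  qed
  ultimately show "- ln (1 - u) \<le> u + 2 * u^2" by linarith
qed

(* Second-order asymptotics W_T(t) = 2 e^-t + O(e^-2t): writing W_T(t) = -2 ln(1 - u) with
   u = r1 the smaller root, one has e^-t <= u <= 2 e^-t and u - e^-t = O(e^-2t). *)
lemma W_T_asymptotics:
  assumes t: "0 < t" and nq: "\<not> 1/4 \<le> exp (-t)"
  shows "\<bar>W_T t - 2 * exp (-t)\<bar> \<le> 24 * exp (-t)^2"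
proof -
  define s where "s = exp (-t)"
  define q where "q = sqrt (1 - 4 * s)"
  have s0: "0 < s" by (simp add: s_def)
  have s4: "s < 1/4" using nq by (simp add: s_def)
  have q0: "0 \<le> q" and q1: "q \<le> 1" using nq by (auto simp: q_def s_def)
  have qq: "q^2 = 1 - 4 * s" using nq by (simp add: q_def s_def)
  define u where "u = (1 - q) / 2"
  have pq: "(1 - q) * (1 + q) = 4 * s" using qq by (simp add: power2_eq_square algebra_simps)
  have u': "u = 2 * s / (1 + q)"
  proof -
    have "1 + q \<noteq> 0" using q0 by simp
    then have "u = (1 - q) * (1 + q) / (2 * (1 + q))" unfolding u_def by (simp add: field_simps)
    also have "\<dots> = 2 * s / (1 + q)" unfolding pq using \<open>1 + q \<noteq> 0\<close> by (simp add: field_simps)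
    finally show ?thesis .
  qed
  have us: "s \<le> u"
  proof -
    have "s * (1 + q) \<le> 2 * s" using q1 s0 by (simp add: algebra_simps)
    then show ?thesis unfolding u' using q0 by (simp add: pos_le_divide_eq)
  qed
  have u2: "u \<le> 2 * s" unfolding u' using q0 s0 by (simp add: divide_le_eq mult_le_cancel_left1)
  have uh: "u \<le> 1/2" using u2 s4 by simp
  have W: "W_T t = - 2 * ln (1 - u)"
  proof -
    have e1: "1 - u = (1 + q) / 2" by (simp add: u_def field_simps)
    have "ln (1 - u) = ln (1 + q) - ln 2" unfolding e1 using q0 by (simp add: ln_div)
    also have "\<dots> = - ln (2 / (1 + q))" using q0 by (simp add: ln_div)
    finally have "ln (1 - u) = - ln (2 / (1 + q))" .
    then show ?thesis using t nq by (simp add: W_T_def s_def[symmetric] q_def[symmetric])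
  qed
  have l1: "u \<le> - ln (1 - u)" and h1: "- ln (1 - u) - u \<le> 2 * u^2"
    using neg_ln_one_minus_bounds[OF uh] by simp_all
  have l4: "u - s \<le> 4 * s^2"
  proof -
    have "u - s = s * (1 - q) / (1 + q)" unfolding u' using q0 by (simp add: field_simps)
    also have "\<dots> \<le> s * (1 - q)"
    proof -
      have c0: "0 \<le> s * (1 - q) * q" using q0 q1 s0 by simp
      have "s * (1 - q) \<le> s * (1 - q) * (1 + q)" using c0 by (simp add: algebra_simps)
      then show ?thesis using q0 by (simp add: pos_divide_le_eq add_pos_nonneg)
    qed
    also have "1 - q = 2 * u" by (simp add: u_def)
    finally have "u - s \<le> s * (2 * u)" using s0 by simp
    also have "\<dots> \<le> s * (2 * (2 * s))" using u2 s0 by (intro mult_left_mono) auto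
    finally show ?thesis by (simp add: power2_eq_square)
  qed
  have "u^2 \<le> (2 * s)^2" using u2 us s0 by (intro power_mono) auto
  then have h2: "2 * u^2 \<le> 8 * s^2" by (simp add: power2_eq_square)
  have h0: "W_T t - 2 * s = 2 * (- ln (1 - u) - u) + 2 * (u - s)" using W by simp
  have "0 \<le> W_T t - 2 * s" using h0 l1 us by (smt (verit))
  moreover have "W_T t - 2 * s \<le> 24 * s^2" using h0 h1 h2 l4 by (smt (verit))
  ultimately show ?thesis by (simp add: s_def)
qed

lemma integrable_W_T_power: "integrable lborel (\<lambda>t. W_T t * t^n)"
proof (rule Bochner_Integration.integrable_bound[OF integrable_mult_right[OF integrable_power_exp]])
  show "AE t in lborel. norm (W_T t * t^n) \<le> norm (8 * (indicator {0..} t * t^n * exp (- t)))"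
  proof (intro AE_I2)
    fix t :: real
    show "norm (W_T t * t^n) \<le> norm (8 * (indicator {0..} t * t^n * exp (- t)))"
      using W_T_le_exp[of t] W_T_nonneg[of t]
      by (cases "t \<le> 0") (auto simp: W_T_def abs_mult indicator_def intro!: mult_right_mono)
  qed
qed simp

lemma integrable_W_T_inverse: "integrable lborel (\<lambda>t. W_T t * (1 / t))"
proof (rule Bochner_Integration.integrable_bound[OF integrable_mult_right[OF integrable_power_exp[of 0]]])
  show "AE t in lborel. norm (W_T t * (1 / t)) \<le> norm (8 * (indicator {0..} t * t^0 * exp (- t)))"
  proof (intro AE_I2)
    fix t :: real
    show "norm (W_T t * (1 / t)) \<le> norm (8 * (indicator {0..} t * t^0 * exp (- t)))"
    proof (cases "t \<le> 0")
      case True then show ?thesis by (simp add: W_T_def)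
    next
      case False
      (* near 0 use W_T(t)/t <= 1 <= 8 e^-t, for t >= 1 use W_T(t)/t <= W_T(t) *)
      have "W_T t / t \<le> 8 * exp (-t)"
      proof (cases "t \<le> 1")
        case True
        have "1 - t \<le> exp (-t)" using exp_ge_add_one_self[of "-t"] by simp
        then have "exp (-1) \<le> exp (-t)" using True by simp
        moreover have "1 / 8 \<le> exp (- 1::real)"
        proof -
          have "exp (1::real) \<le> 8" using exp_le by simp
          then show ?thesis by (simp add: exp_minus field_simps)
        qed
        ultimately show ?thesis using W_T_div_bounds(2)[of t] by linarith
      next
        case f2: False
        have "W_T t / t \<le> W_T t" using f2 W_T_nonneg[of t] by (simp add: divide_le_eq mult_le_cancel_left1)
        then show ?thesis using W_T_le_exp[of t] by linarith
      qed
      then show ?thesis using False W_T_nonneg[of t] by (simp add: abs_mult indicator_def)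
    qed
  qed
qed simp

lemma T_set_borel[measurable]: "T_set \<in> sets (borel :: (real \<times> real) measure)"
proof -
  have "T_set = {z\<in>space (borel \<Otimes>\<^sub>M borel). 0 \<le> fst z \<and> fst z \<le> 1 \<and> 0 \<le> snd z \<and> snd z \<le> 1 \<and> 1 \<le> fst z + snd z}"
    by (auto simp: T_set_def space_pair_measure)
  also have "\<dots> \<in> sets (borel \<Otimes>\<^sub>M borel)" by measurable
  finally show ?thesis by (metis borel_prod)
qed

lemma fst_borel[measurable]: "fst \<in> borel_measurable (borel :: (real \<times> real) measure)"
  using measurable_fst[of "borel::real measure" "borel::real measure"] by (simp add: borel_prod)

lemma snd_borel[measurable]: "snd \<in> borel_measurable (borel :: (real \<times> real) measure)"
  using measurable_snd[of "borel::real measure" "borel::real measure"] by (simp add: borel_prod)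

lemma T_slice_substitution:
  fixes h :: "real \<Rightarrow> real"
  assumes [measurable]: "h \<in> borel_measurable borel" and x: "0 < x" "x < 1"
  shows "(\<integral>\<^sup>+y. ennreal (indicator T_set (x, y) / (x * y) * h (- ln (x * y))) \<partial>lborel)
       = (\<integral>\<^sup>+t. ennreal (h t / x * indicator {- ln x .. - ln (x * (1 - x))} t) \<partial>lborel)"
proof -
  define f where "f u = h (- u) / x" for u
  have [measurable]: "f \<in> borel_measurable borel" unfolding f_def by measurable
  have "(\<integral>\<^sup>+y. ennreal (indicator T_set (x, y) / (x * y) * h (- ln (x * y))) \<partial>lborel)
      = (\<integral>\<^sup>+y. ennreal (f (ln (x * y)) * (1 / y) * indicator {1 - x..1} y) \<partial>lborel)"
    using x by (intro nn_integral_cong) (auto simp: T_set_def indicator_def f_def field_simps)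
  also have "\<dots> = (\<integral>\<^sup>+u. f u * indicator {ln (x * (1 - x))..ln (x * 1)} u \<partial>lborel)"
  proof (rule nn_integral_substitution[where g = "\<lambda>y. ln (x * y)" and g' = "\<lambda>y. 1 / y"
        and a = "1 - x" and b = 1, symmetric])
    show "set_borel_measurable borel {ln (x * (1 - x))..ln (x * 1)} f"
      unfolding set_borel_measurable_def by measurable
    fix y assume y: "y \<in> {1 - x..1}"
    then have "y > 0" using x by auto
    then show "((\<lambda>y. ln (x * y)) has_real_derivative 1 / y) (at y)"
      using x by (auto intro!: derivative_eq_intros simp: field_simps)
    show "0 \<le> 1 / y" using \<open>y > 0\<close> by simp
  next
    show "continuous_on {1 - x..1} (\<lambda>y. 1 / y)"
      using x by (intro continuous_intros) auto
  qed (use x in auto)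
  also have "\<dots> = (\<integral>\<^sup>+t. ennreal (f (- t) * indicator {ln (x * (1 - x))..ln x} (- t)) \<partial>lborel)"
    using nn_integral_real_affine[of "\<lambda>u. ennreal (f u * indicator {ln (x * (1 - x))..ln x} u)" "-1" 0]
    by simp
  also have "\<dots> = (\<integral>\<^sup>+t. ennreal (h t / x * indicator {- ln x .. - ln (x * (1 - x))} t) \<partial>lborel)"
    by (intro nn_integral_cong) (auto simp: indicator_def f_def)
  finally show ?thesis .
qed

(* fibre_weight t x / dx is what remains of dx dy/(xy) after fixing t = -ln(x y):
   x contributes iff its slice reaches the level t. *)
definition fibre_weight :: "real \<Rightarrow> real \<Rightarrow> real" where
  "fibre_weight t x = (if 0 < x \<and> x < 1 \<and> - ln x \<le> t \<and> t \<le> - ln (x * (1 - x)) then 1 / x else 0)"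

lemma fibre_weight_nonneg: "0 \<le> fibre_weight t x"
  by (simp add: fibre_weight_def)

lemma fibre_weight_measurable[measurable]:
  "(\<lambda>(x, t). fibre_weight t x) \<in> borel_measurable (lborel \<Otimes>\<^sub>M lborel)"
  unfolding fibre_weight_def by measurable

lemma W_T_fibre: "(\<integral>\<^sup>+x. ennreal (fibre_weight t x) \<partial>lborel) = ennreal (W_T t)"
proof (cases "t > 0")
  case False
  have "fibre_weight t x = 0" for x
  proof -
    have "\<not> (0 < x \<and> x < 1 \<and> - ln x \<le> t)" using False ln_less_zero[of x] by linarith
    then show ?thesis by (auto simp: fibre_weight_def)
  qed
  then show ?thesis using False by (simp add: W_T_def)
next
  case True
  have "fibre_weight t x = indicator {x. 0 < x \<and> x < 1 \<and> x - x^2 \<le> exp (-t) \<and> exp (-t) \<le> x} x / x" for x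
  proof (cases "0 < x \<and> x < 1")
    case True
    then have p: "0 < x * (1 - x)" by simp
    have "- ln x \<le> t \<longleftrightarrow> exp (-t) \<le> x" using True
      by (metis exp_le_cancel_iff exp_ln minus_le_iff)
    moreover have "t \<le> - ln (x * (1 - x)) \<longleftrightarrow> x - x^2 \<le> exp (-t)"
    proof -
      have "t \<le> - ln (x * (1 - x)) \<longleftrightarrow> ln (x * (1 - x)) \<le> -t" by linarith
      also have "\<dots> \<longleftrightarrow> x * (1 - x) \<le> exp (-t)" using p
        by (metis exp_le_cancel_iff exp_ln)
      finally show ?thesis by (simp add: power2_eq_square algebra_simps)
    qed
    ultimately show ?thesis using True by (auto simp: fibre_weight_def indicator_def)
  qed (auto simp: fibre_weight_def indicator_def)
  then show ?thesis using W_T_slice[OF True] by simp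
qed

lemma T_set_pushforward:
  fixes h :: "real \<Rightarrow> real"
  assumes hm[measurable]: "h \<in> borel_measurable borel" and nn: "\<And>t. 0 \<le> h t"
  shows "(\<integral>\<^sup>+z. ennreal (indicator T_set z / (fst z * snd z) * h (- ln (fst z * snd z))) \<partial>lborel)
       = (\<integral>\<^sup>+t. ennreal (W_T t * h t) \<partial>lborel)"
proof -
  define K where "K x t = ennreal (h t * fibre_weight t x)" for x t :: real
  have [measurable]: "case_prod K \<in> borel_measurable (lborel \<Otimes>\<^sub>M lborel)"
    unfolding K_def by measurable
  have slice: "(\<integral>\<^sup>+y. ennreal (indicator T_set (x, y) / (x * y) * h (- ln (x * y))) \<partial>lborel)
           = (\<integral>\<^sup>+t. K x t \<partial>lborel)" if "x \<noteq> 1" for x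
  proof (cases "0 < x \<and> x < 1")
    case True
    then show ?thesis
      by (subst T_slice_substitution[OF hm]) (auto intro!: nn_integral_cong simp: K_def fibre_weight_def indicator_def)
  next
    case False
    then have "x \<le> 0 \<or> 1 < x" using that by auto
    then have "ennreal (indicator T_set (x, y) / (x * y) * h (- ln (x * y))) = 0" for y
      by (cases "x = 0") (auto simp: T_set_def indicator_def)
    moreover have "K x t = 0" for t using False by (auto simp: K_def fibre_weight_def)
    ultimately show ?thesis by simp
  qed
  have "(\<integral>\<^sup>+z. ennreal (indicator T_set z / (fst z * snd z) * h (- ln (fst z * snd z))) \<partial>lborel)
      = (\<integral>\<^sup>+x. \<integral>\<^sup>+y. ennreal (indicator T_set (x, y) / (x * y) * h (- ln (x * y))) \<partial>lborel \<partial>lborel)"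
    by (subst lborel_prod[symmetric], subst lborel.nn_integral_fst[symmetric]) (auto simp: lborel_prod)
  also have "\<dots> = (\<integral>\<^sup>+x. \<integral>\<^sup>+t. K x t \<partial>lborel \<partial>lborel)"
    by (rule nn_integral_cong_AE, rule AE_mp[OF AE_lborel_singleton[of 1]]) (intro AE_I2 impI, erule slice)
  also have "\<dots> = (\<integral>\<^sup>+t. \<integral>\<^sup>+x. K x t \<partial>lborel \<partial>lborel)"
    by (rule lborel_pair.Fubini'[symmetric]) simp
  also have "\<dots> = (\<integral>\<^sup>+t. ennreal (W_T t * h t) \<partial>lborel)"
  proof (rule nn_integral_cong)
    fix t :: real
    have "(\<integral>\<^sup>+x. K x t \<partial>lborel) = ennreal (h t) * (\<integral>\<^sup>+x. ennreal (fibre_weight t x) \<partial>lborel)"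
      using nn[of t] fibre_weight_nonneg[of t]
      by (subst nn_integral_cmult[symmetric]) (auto simp: K_def ennreal_mult)
    then show "(\<integral>\<^sup>+x. K x t \<partial>lborel) = ennreal (W_T t * h t)"
      using nn[of t] W_T_nonneg[of t] by (simp add: W_T_fibre ennreal_mult'' mult.commute)
  qed
  finally show ?thesis .
qed

definition T_weight :: "real \<times> real \<Rightarrow> real" where
  "T_weight z = indicator T_set z / (fst z * snd z)"

lemma T_weight_borel[measurable]: "T_weight \<in> borel_measurable lborel"
  unfolding T_weight_def by measurable

lemma T_weight_nonneg: "0 \<le> T_weight z"
  by (cases z) (auto simp: T_weight_def T_set_def indicator_def)

lemma distr_T_weight: "distr (density lborel T_weight) borel (\<lambda>z. - ln (fst z * snd z))
   = density lborel W_T"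
proof (rule measure_eqI)
  fix A assume "A \<in> sets (distr (density lborel T_weight) borel (\<lambda>z. - ln (fst z * snd z)))"
  then have A[measurable]: "A \<in> sets borel" by simp
  have "(\<lambda>z::real\<times>real. - ln (fst z * snd z)) \<in> borel_measurable borel" by measurable
  from measurable_sets[OF this A]
  have [measurable]: "(\<lambda>z::real\<times>real. - ln (fst z * snd z)) -` A \<in> sets borel" by simp
  have "emeasure (distr (density lborel T_weight) borel (\<lambda>z. - ln (fst z * snd z))) A
     = (\<integral>\<^sup>+z. ennreal (T_weight z) * indicator ((\<lambda>z. - ln (fst z * snd z)) -` A) z \<partial>lborel)"
    by (subst emeasure_distr) (auto simp: emeasure_density)
  also have "\<dots> = (\<integral>\<^sup>+z. ennreal (indicator T_set z / (fst z * snd z) * indicator A (- ln (fst z * snd z))) \<partial>lborel)"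
    by (intro nn_integral_cong) (auto simp: T_weight_def indicator_def)
  also have "\<dots> = (\<integral>\<^sup>+t. ennreal (W_T t * indicator A t) \<partial>lborel)"
    by (rule T_set_pushforward) auto
  also have "\<dots> = emeasure (density lborel W_T) A"
    by (subst emeasure_density) (auto intro!: nn_integral_cong simp: indicator_def)
  finally show "emeasure (distr (density lborel T_weight) borel (\<lambda>z. - ln (fst z * snd z))) A =
         emeasure (density lborel W_T) A" .
qed simp

lemma T_set_transfer:
  fixes \<Phi> :: "real \<Rightarrow> real"
  assumes [measurable]: "\<Phi> \<in> borel_measurable borel"
  shows "set_integrable lborel T_set (\<lambda>z. \<Phi> (- ln (fst z * snd z)) / (fst z * snd z))
           \<longleftrightarrow> integrable lborel (\<lambda>t. W_T t * \<Phi> t)"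
    and "(LINT z:T_set|lborel. \<Phi> (- ln (fst z * snd z)) / (fst z * snd z)) = (LINT t|lborel. W_T t * \<Phi> t)"
proof -
  have eq: "(\<lambda>z. indicator T_set z *\<^sub>R (\<Phi> (- ln (fst z * snd z)) / (fst z * snd z)))
      = (\<lambda>z. T_weight z *\<^sub>R \<Phi> (- ln (fst z * snd z)))"
    by (auto simp: T_weight_def)
  have "set_integrable lborel T_set (\<lambda>z. \<Phi> (- ln (fst z * snd z)) / (fst z * snd z))
     \<longleftrightarrow> integrable (density lborel T_weight) (\<lambda>z. \<Phi> (- ln (fst z * snd z)))"
    unfolding set_integrable_def eq
    by (subst integrable_density) (auto simp: T_weight_nonneg)
  also have "\<dots> \<longleftrightarrow> integrable (distr (density lborel T_weight) borel (\<lambda>z. - ln (fst z * snd z))) \<Phi>"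
    by (subst integrable_distr_eq) auto
  also have "\<dots> \<longleftrightarrow> integrable lborel (\<lambda>t. W_T t * \<Phi> t)"
    unfolding distr_T_weight by (subst integrable_density) (auto simp: W_T_nonneg)
  finally show "set_integrable lborel T_set (\<lambda>z. \<Phi> (- ln (fst z * snd z)) / (fst z * snd z))
           \<longleftrightarrow> integrable lborel (\<lambda>t. W_T t * \<Phi> t)" .
  have "(LINT z:T_set|lborel. \<Phi> (- ln (fst z * snd z)) / (fst z * snd z))
      = integral\<^sup>L (density lborel T_weight) (\<lambda>z. \<Phi> (- ln (fst z * snd z)))"
    unfolding set_lebesgue_integral_def eq
    by (subst integral_density) (auto simp: T_weight_nonneg)
  also have "\<dots> = integral\<^sup>L (distr (density lborel T_weight) borel (\<lambda>z. - ln (fst z * snd z))) \<Phi>"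
    by (subst integral_distr) auto
  also have "\<dots> = (LINT t|lborel. W_T t * \<Phi> t)"
    unfolding distr_T_weight by (subst integral_density) (auto simp: W_T_nonneg)
  finally show "(LINT z:T_set|lborel. \<Phi> (- ln (fst z * snd z)) / (fst z * snd z)) = (LINT t|lborel. W_T t * \<Phi> t)" .
qed

lemma I_n_moment:
  shows "set_integrable lborel T_set (f_n n)" and "I_n n = (LINT t|lborel. W_T t * t^n)"
proof -
  have f: "f_n n = (\<lambda>z. (\<lambda>t. t ^ n) (- ln (fst z * snd z)) / (fst z * snd z))"
    by (auto simp: f_n_def fun_eq_iff)
  have m: "(\<lambda>t::real. t ^ n) \<in> borel_measurable borel" by measurable
  show "set_integrable lborel T_set (f_n n)"
    unfolding f T_set_transfer(1)[OF m] by (rule integrable_W_T_power)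
  show "I_n n = (LINT t|lborel. W_T t * t^n)"
    unfolding I_n_def f T_set_transfer(2)[OF m] ..
qed

lemma I_neg1_moment:
  shows "set_integrable lborel T_set f_neg1" and "I_neg1 = (LINT t|lborel. W_T t * (1 / t))"
proof -
  have f: "f_neg1 = (\<lambda>z. (\<lambda>t. 1 / t) (- ln (fst z * snd z)) / (fst z * snd z))"
    by (auto simp: f_neg1_def fun_eq_iff mult.commute)
  have m: "(\<lambda>t::real. 1 / t) \<in> borel_measurable borel" by measurable
  show "set_integrable lborel T_set f_neg1"
    unfolding f T_set_transfer(1)[OF m] by (rule integrable_W_T_inverse)
  show "I_neg1 = (LINT t|lborel. W_T t * (1 / t))"
    unfolding I_neg1_def f T_set_transfer(2)[OF m] ..
qed

(* 1/(-ln v) on (0,1), and its primitive neg_li c = -li c = int_0^c dv/(-ln v) for 0 < c < 1. *)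
definition inv_neg_ln :: "real \<Rightarrow> real" where
  "inv_neg_ln v = (if 0 < v \<and> v < 1 then 1 / (- ln v) else 0)"

definition neg_li :: "real \<Rightarrow> real" where
  "neg_li c = (LINT v|lborel. indicator {0<..<c} v * inv_neg_ln v)"

lemma inv_neg_ln_borel[measurable]: "inv_neg_ln \<in> borel_measurable borel"
  unfolding inv_neg_ln_def by measurable

lemma inv_neg_ln_nonneg: "0 \<le> inv_neg_ln v"
  by (auto simp: inv_neg_ln_def ln_less_zero less_imp_le)

lemma neg_li_borel[measurable]: "neg_li \<in> borel_measurable borel"
proof -
  have "(\<lambda>z. (if 0 < snd z \<and> snd z < fst z then 1 else 0) * inv_neg_ln (snd z) :: real)
          \<in> borel_measurable (borel \<Otimes>\<^sub>M lborel)" by measurable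
  then have "(\<lambda>(c, v). indicator {0<..<c} v * inv_neg_ln v :: real) \<in> borel_measurable (borel \<Otimes>\<^sub>M lborel)"
    by (rule measurable_cong[THEN iffD1, rotated]) (auto simp: indicator_def space_pair_measure)
  then show ?thesis
    unfolding neg_li_def by (rule lborel.borel_measurable_lebesgue_integral)
qed

(* 1/(-ln v) is bounded by 1/(-ln c) on (0, c), so the integral exists for c < 1. *)
lemma neg_li_integrable:
  assumes c: "0 < c" "c < 1"
  shows "integrable lborel (\<lambda>v. indicator {0<..<c} v * inv_neg_ln v)"
proof -
  have "integrable lborel (\<lambda>v. indicator {0<..<c} v *\<^sub>R inv_neg_ln v)"
  proof (rule integrableI_bounded_set_indicator[where B = "1 / (- ln c)"])
    show "AE x in lborel. x \<in> {0<..<c} \<longrightarrow> norm (inv_neg_ln x) \<le> 1 / (- ln c)"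
    proof (intro AE_I2 impI)
      fix x assume x: "x \<in> {0<..<c}"
      then have "ln x \<le> ln c" using c by simp
      moreover have "ln c < 0" using c by simp
      ultimately have "1 / (- ln x) \<le> 1 / (- ln c)" by (intro divide_left_mono) (auto intro: mult_neg_neg)
      then show "norm (inv_neg_ln x) \<le> 1 / (- ln c)" using x c inv_neg_ln_nonneg[of x] by (auto simp: inv_neg_ln_def)
    qed
  qed (use c in auto)
  then show ?thesis by simp
qed

lemma neg_li_nn_integral:
  assumes "0 < c" "c < 1"
  shows "(\<integral>\<^sup>+v. ennreal (indicator {0<..<c} v * inv_neg_ln v) \<partial>lborel) = ennreal (neg_li c)"
  unfolding neg_li_def
  by (rule nn_integral_eq_integral[OF neg_li_integrable[OF assms]]) (auto simp: inv_neg_ln_nonneg)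

lemma neg_li_nonneg: "0 \<le> neg_li c"
  unfolding neg_li_def by (rule integral_nonneg_AE) (auto simp: inv_neg_ln_nonneg)

lemma li_eq_neg_li:
  assumes c: "0 < c" "c < 1"
  shows "li c = - neg_li c"
proof -
  have "li c = (LINT v|lborel. indicator {0<..<c} v *\<^sub>R (1 / ln v))"
    using c by (simp add: li_def interval_lebesgue_integral_def set_lebesgue_integral_def zero_ereal_def)
  also have "\<dots> = (LINT v|lborel. - (indicator {0<..<c} v * inv_neg_ln v))"
    using c by (intro Bochner_Integration.integral_cong) (auto simp: indicator_def inv_neg_ln_def)
  also have "\<dots> = - neg_li c" by (simp add: neg_li_def)
  finally show ?thesis .
qed

lemma neg_li_mono: assumes "0 < a" "a \<le> x" "x < 1" shows "neg_li a \<le> neg_li x"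
  unfolding neg_li_def
  by (rule integral_mono[OF neg_li_integrable neg_li_integrable])
     (use assms inv_neg_ln_nonneg in \<open>auto simp: indicator_def\<close>)

lemma neg_li_diff:
  assumes a: "0 < a" "a \<le> x" "x < 1"
  shows "(\<integral>\<^sup>+v. ennreal (indicator {a..x} v * inv_neg_ln v) \<partial>lborel) = ennreal (neg_li x - neg_li a)"
proof -
  define J where "J = (\<integral>\<^sup>+v. ennreal (indicator {a..x} v * inv_neg_ln v) \<partial>lborel)"
  have "AE v in lborel. ennreal (indicator {0<..<a} v * inv_neg_ln v) + ennreal (indicator {a..x} v * inv_neg_ln v)
        = ennreal (indicator {0<..<x} v * inv_neg_ln v)"
    using AE_lborel_singleton[of x] by eventually_elim (use a in \<open>auto simp: indicator_def\<close>)
  then have "(\<integral>\<^sup>+v. ennreal (indicator {0<..<a} v * inv_neg_ln v) + ennreal (indicator {a..x} v * inv_neg_ln v) \<partial>lborel)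
     = (\<integral>\<^sup>+v. ennreal (indicator {0<..<x} v * inv_neg_ln v) \<partial>lborel)"
    by (rule nn_integral_cong_AE)
  then have "ennreal (neg_li a) + J = ennreal (neg_li x)"
    using a by (subst (asm) nn_integral_add) (auto simp: neg_li_nn_integral J_def)
  then have "J = ennreal (neg_li x) - ennreal (neg_li a)"
    by (metis ennreal_add_diff_cancel_left ennreal_neq_top)
  also have "\<dots> = ennreal (neg_li x - neg_li a)" by (simp add: ennreal_minus neg_li_nonneg)
  finally show ?thesis unfolding J_def .
qed

(* The weight e^-t/t: composed with t = -ln(xy) and divided by xy it becomes 1/(-ln(xy)). *)
definition expdiv :: "real \<Rightarrow> real" where
  "expdiv t = (if 0 < t then exp (- t) / t else 0)"

lemma expdiv_borel[measurable]: "expdiv \<in> borel_measurable borel"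
  unfolding expdiv_def by measurable

lemma expdiv_nonneg: "0 \<le> expdiv t" by (simp add: expdiv_def)

(* With v = x y: int_{1-x}^1 dy/(-ln(xy)) = (neg_li x - neg_li (x(1-x))) / x. *)
lemma T_slice_expdiv:
  assumes x: "0 < x" "x < 1"
  shows "(\<integral>\<^sup>+y. ennreal (indicator T_set (x, y) / (x * y) * expdiv (- ln (x * y))) \<partial>lborel)
       = ennreal ((neg_li x - neg_li (x * (1 - x))) / x)"
proof -
  define f where "f v = ennreal (indicator {x * (1 - x)..x} v * inv_neg_ln v)" for v
  have [measurable]: "f \<in> borel_measurable borel" unfolding f_def by measurable
  have "(\<integral>\<^sup>+y. ennreal (indicator T_set (x, y) / (x * y) * expdiv (- ln (x * y))) \<partial>lborel)
      = (\<integral>\<^sup>+y. f (0 + x * y) \<partial>lborel)"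
  proof (rule nn_integral_cong)
    fix y :: real
    show "ennreal (indicator T_set (x, y) / (x * y) * expdiv (- ln (x * y))) = f (0 + x * y)"
    proof (cases "1 - x \<le> y \<and> y \<le> 1")
      case True
      then have y0: "0 < y" using x by auto
      have "x * (1 - x) \<le> x * y" using True x by (intro mult_left_mono) auto
      moreover have "x * y \<le> x" using True x by (simp add: mult_left_le)
      moreover have "0 < x * y" using x y0 by simp
      ultimately show ?thesis using True x y0
        by (auto simp: f_def indicator_def T_set_def expdiv_def inv_neg_ln_def)
    next
      case False
      then have "\<not> (x * (1 - x) \<le> x * y \<and> x * y \<le> x)" using x by auto
      then show ?thesis using False by (auto simp: f_def indicator_def T_set_def)
    qed
  qed
  also have "\<dots> = ennreal (1 / x) * (ennreal x * (\<integral>\<^sup>+y. f (0 + x * y) \<partial>lborel))"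
    using x by (simp add: mult.assoc[symmetric] ennreal_mult[symmetric])
  also have "ennreal x * (\<integral>\<^sup>+y. f (0 + x * y) \<partial>lborel) = (\<integral>\<^sup>+v. f v \<partial>lborel)"
    using nn_integral_real_affine[of f x 0] x by simp
  also have "\<dots> = ennreal (neg_li x - neg_li (x * (1 - x)))"
    unfolding f_def using x by (intro neg_li_diff) (auto simp: mult_left_le)
  also have "ennreal (1 / x) * \<dots> = ennreal ((neg_li x - neg_li (x * (1 - x))) / x)"
    using x by (subst ennreal_mult'[symmetric]) (auto simp: mult.commute)
  finally show ?thesis .
qed

lemma T_set_expdiv:
  "(\<integral>\<^sup>+z. ennreal (indicator T_set z / (fst z * snd z) * expdiv (- ln (fst z * snd z))) \<partial>lborel)
   = (\<integral>\<^sup>+x. ennreal (indicator {0<..<1} x * ((neg_li x - neg_li (x * (1 - x))) / x)) \<partial>lborel)"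
proof -
  have slice: "(\<integral>\<^sup>+y. ennreal (indicator T_set (x, y) / (x * y) * expdiv (- ln (x * y))) \<partial>lborel)
        = ennreal (indicator {0<..<1} x * ((neg_li x - neg_li (x * (1 - x))) / x))" if "x \<noteq> 1" for x
  proof (cases "0 < x \<and> x < 1")
    case True
    then show ?thesis using T_slice_expdiv[of x] by (simp add: indicator_def)
  next
    case False
    then have "x \<le> 0 \<or> 1 < x" using that by auto
    then have "ennreal (indicator T_set (x, y) / (x * y) * expdiv (- ln (x * y))) = 0" for y
      by (cases "x = 0") (auto simp: T_set_def indicator_def)
    then show ?thesis using False by (auto simp: indicator_def)
  qed
  have "(\<integral>\<^sup>+z. ennreal (indicator T_set z / (fst z * snd z) * expdiv (- ln (fst z * snd z))) \<partial>lborel)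
      = (\<integral>\<^sup>+x. \<integral>\<^sup>+y. ennreal (indicator T_set (x, y) / (x * y) * expdiv (- ln (x * y))) \<partial>lborel \<partial>lborel)"
    by (subst lborel_prod[symmetric], subst lborel.nn_integral_fst[symmetric]) (auto simp: lborel_prod)
  also have "\<dots> = (\<integral>\<^sup>+x. ennreal (indicator {0<..<1} x * ((neg_li x - neg_li (x * (1 - x))) / x)) \<partial>lborel)"
    by (rule nn_integral_cong_AE, rule AE_mp[OF AE_lborel_singleton[of 1]]) (intro AE_I2 impI, erule slice)
  finally show ?thesis .
qed

(* int_0^1 (-li x)/x dx = 1: by Tonelli, int_0^1 dv/(-ln v) int_v^1 dx/x = int_0^1 dv. *)
lemma neg_li_div_nn_integral:
  "(\<integral>\<^sup>+x. ennreal (indicator {0<..<1} x * (neg_li x / x)) \<partial>lborel) = 1"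
proof -
  define K where "K x v = ennreal (if 0 < x \<and> x < 1 \<and> 0 < v \<and> v < x then inv_neg_ln v / x else 0)" for x v :: real
  have [measurable]: "case_prod K \<in> borel_measurable (lborel \<Otimes>\<^sub>M lborel)"
    unfolding K_def by measurable
  have "(\<integral>\<^sup>+x. ennreal (indicator {0<..<1} x * (neg_li x / x)) \<partial>lborel) = (\<integral>\<^sup>+x. \<integral>\<^sup>+v. K x v \<partial>lborel \<partial>lborel)"
  proof (rule nn_integral_cong)
    fix x :: real
    show "ennreal (indicator {0<..<1} x * (neg_li x / x)) = (\<integral>\<^sup>+v. K x v \<partial>lborel)"
    proof (cases "0 < x \<and> x < 1")
      case True
      have "(\<integral>\<^sup>+v. K x v \<partial>lborel) = (\<integral>\<^sup>+v. ennreal (1 / x) * ennreal (indicator {0<..<x} v * inv_neg_ln v) \<partial>lborel)"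
        using True by (intro nn_integral_cong) (auto simp: K_def indicator_def ennreal_mult'[symmetric] inv_neg_ln_nonneg)
      also have "\<dots> = ennreal (1 / x) * ennreal (neg_li x)"
        using True by (subst nn_integral_cmult) (auto simp: neg_li_nn_integral)
      also have "\<dots> = ennreal (indicator {0<..<1} x * (neg_li x / x))"
        using True by (subst ennreal_mult'[symmetric]) auto
      finally show ?thesis ..
    qed (auto simp: K_def indicator_def)
  qed
  also have "\<dots> = (\<integral>\<^sup>+v. \<integral>\<^sup>+x. K x v \<partial>lborel \<partial>lborel)"
    by (rule lborel_pair.Fubini'[symmetric]) simp
  also have "\<dots> = (\<integral>\<^sup>+v. ennreal (indicator {0<..<1::real} v) \<partial>lborel)"
  proof (rule nn_integral_cong)
    fix v :: real
    show "(\<integral>\<^sup>+x. K x v \<partial>lborel) = ennreal (indicator {0<..<1} v)"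
    proof (cases "0 < v \<and> v < 1")
      case True
      have "AE x in lborel. K x v = ennreal (inv_neg_ln v) * ennreal (indicator {v..1} x / x)"
        using AE_lborel_singleton[of 1] AE_lborel_singleton[of v]
        by eventually_elim (use True in \<open>auto simp: K_def indicator_def ennreal_mult'[symmetric] inv_neg_ln_nonneg\<close>)
      then have "(\<integral>\<^sup>+x. K x v \<partial>lborel) = (\<integral>\<^sup>+x. ennreal (inv_neg_ln v) * ennreal (indicator {v..1} x / x) \<partial>lborel)"
        by (rule nn_integral_cong_AE)
      also have "\<dots> = ennreal (inv_neg_ln v) * ennreal (ln 1 - ln v)"
        using True by (subst nn_integral_cmult) (auto simp: nn_integral_inverse_Icc)
      also have "\<dots> = 1"
      proof -
        have "ln v < 0" using True by simp
        then have "inv_neg_ln v * (ln 1 - ln v) = 1" using True by (simp add: inv_neg_ln_def)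
        then show ?thesis by (subst ennreal_mult'[symmetric]) (auto simp: inv_neg_ln_nonneg)
      qed
      finally show ?thesis using True by simp
    next
      case False
      then have "K x v = 0" for x by (auto simp: K_def)
      then show ?thesis using False by (simp add: indicator_def)
    qed
  qed
  also have "\<dots> = 1" by (simp add: ennreal_indicator)
  finally show ?thesis .
qed

(* The integrand of int_0^1 li(x - x^2)/x dx, up to sign. *)
definition li_quot :: "real \<Rightarrow> real" where
  "li_quot x = indicator {0<..<1} x * (neg_li (x * (1 - x)) / x)"

lemma li_quot_borel[measurable]: "li_quot \<in> borel_measurable borel"
  unfolding li_quot_def by measurable

lemma li_quot_nonneg: "0 \<le> li_quot x"
  by (auto simp: li_quot_def indicator_def neg_li_nonneg)

lemma li_quot_eq: "indicator {0<..<1} x *\<^sub>R (li (x - x\<^sup>2) / x) = - li_quot x"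
proof (cases "0 < x \<and> x < 1")
  case True
  have "x - x\<^sup>2 = x * (1 - x)" by (simp add: power2_eq_square algebra_simps)
  moreover have "0 < x * (1 - x)" "x * (1 - x) < 1" using True
    by (auto simp: mult_left_le) (smt (verit) mult_left_le)
  ultimately show ?thesis using True by (simp add: li_eq_neg_li li_quot_def)
qed (simp add: li_quot_def)

(* li_quot is dominated by (-li x)/x, whose integral is 1; the difference is the
   y-integrated form of 1/(-ln(xy)) over T. *)
lemma li_quot_integrable:
  shows "integrable lborel li_quot"
    and "(\<integral>\<^sup>+z. ennreal (indicator T_set z / (fst z * snd z) * expdiv (- ln (fst z * snd z))) \<partial>lborel)
         = ennreal (1 - integral\<^sup>L lborel li_quot)"
    and "integral\<^sup>L lborel li_quot \<le> 1"
proof -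
  define Q where "Q x = indicator {0<..<1} x * (neg_li x / x)" for x :: real
  have [measurable]: "Q \<in> borel_measurable borel" unfolding Q_def by measurable
  have Q_nonneg: "0 \<le> Q x" for x by (auto simp: Q_def indicator_def neg_li_nonneg)
  have le_Q: "li_quot x \<le> Q x" for x
  proof (cases "0 < x \<and> x < 1")
    case True
    then have "neg_li (x * (1 - x)) \<le> neg_li x" by (intro neg_li_mono) (auto simp: mult_left_le)
    then show ?thesis using True by (simp add: li_quot_def Q_def divide_right_mono)
  qed (simp add: li_quot_def Q_def)
  have Q1: "(\<integral>\<^sup>+x. ennreal (Q x) \<partial>lborel) = ennreal 1"
    using neg_li_div_nn_integral by (simp add: Q_def)
  have Qi: "integrable lborel Q" and QI: "integral\<^sup>L lborel Q = 1"
    using integrable_integral_from_nn_integral[OF _ Q_nonneg Q1] by auto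
  show Pi: "integrable lborel li_quot"
    by (rule Bochner_Integration.integrable_bound[OF Qi])
       (use li_quot_nonneg le_Q in \<open>auto intro!: AE_I2 simp: abs_of_nonneg Q_nonneg\<close>)
  show "integral\<^sup>L lborel li_quot \<le> 1"
    using integral_mono[OF Pi Qi le_Q] QI by simp
  define Z where "Z = (\<integral>\<^sup>+z. ennreal (indicator T_set z / (fst z * snd z) * expdiv (- ln (fst z * snd z))) \<partial>lborel)"
  have Z: "Z = (\<integral>\<^sup>+x. ennreal (Q x - li_quot x) \<partial>lborel)"
    unfolding Z_def T_set_expdiv
    by (intro nn_integral_cong) (simp add: Q_def li_quot_def diff_divide_distrib right_diff_distrib)
  have "ennreal 1 = (\<integral>\<^sup>+x. ennreal (li_quot x) + ennreal (Q x - li_quot x) \<partial>lborel)"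
    unfolding Q1[symmetric] using le_Q li_quot_nonneg
    by (intro nn_integral_cong) (simp add: ennreal_plus[symmetric])
  also have "\<dots> = (\<integral>\<^sup>+x. ennreal (li_quot x) \<partial>lborel) + Z"
    unfolding Z by (rule nn_integral_add) auto
  also have "(\<integral>\<^sup>+x. ennreal (li_quot x) \<partial>lborel) = ennreal (integral\<^sup>L lborel li_quot)"
    by (rule nn_integral_eq_integral[OF Pi]) (use li_quot_nonneg in auto)
  finally have "Z = ennreal 1 - ennreal (integral\<^sup>L lborel li_quot)"
    by (metis ennreal_add_diff_cancel_left ennreal_neq_top)
  also have "\<dots> = ennreal (1 - integral\<^sup>L lborel li_quot)"
    by (rule ennreal_minus) (simp add: integral_nonneg_AE li_quot_nonneg)
  finally show "(\<integral>\<^sup>+z. ennreal (indicator T_set z / (fst z * snd z) * expdiv (- ln (fst z * snd z))) \<partial>lborel)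
         = ennreal (1 - integral\<^sup>L lborel li_quot)"
    unfolding Z_def .
qed

lemma W_T_expdiv_integral:
  shows "interval_lebesgue_integrable lborel 0 1 (\<lambda>x. li (x - x\<^sup>2) / x)"
    and "integrable lborel (\<lambda>t. W_T t * expdiv t)"
    and "(LINT t|lborel. W_T t * expdiv t) = 1 + (LBINT x=0..1. li (x - x\<^sup>2) / x)"
proof -
  have ei: "einterval 0 1 = {0<..<1::real}" by (simp add: zero_ereal_def one_ereal_def)
  have quot: "(\<lambda>x. indicator {0<..<1} x *\<^sub>R (li (x - x\<^sup>2) / x)) = (\<lambda>x. - li_quot x)"
    using li_quot_eq by auto
  show "interval_lebesgue_integrable lborel 0 1 (\<lambda>x. li (x - x\<^sup>2) / x)"
    unfolding interval_lebesgue_integrable_def set_integrable_def ei quot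
    using li_quot_integrable(1) by simp
  have li_int: "(LBINT x=0..1. li (x - x\<^sup>2) / x) = - integral\<^sup>L lborel li_quot"
    unfolding interval_lebesgue_integral_def set_lebesgue_integral_def ei quot by simp
  have W: "(\<integral>\<^sup>+t. ennreal (W_T t * expdiv t) \<partial>lborel) = ennreal (1 - integral\<^sup>L lborel li_quot)"
    using T_set_pushforward[of expdiv] li_quot_integrable(2) by (simp add: expdiv_nonneg)
  have Wnn: "0 \<le> W_T t * expdiv t" for t by (simp add: W_T_nonneg expdiv_nonneg)
  show "integrable lborel (\<lambda>t. W_T t * expdiv t)"
    by (rule integrable_integral_from_nn_integral(1)[OF _ Wnn W]) (use li_quot_integrable(3) in auto)
  have "(LINT t|lborel. W_T t * expdiv t) = 1 - integral\<^sup>L lborel li_quot"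
    by (rule integrable_integral_from_nn_integral(2)[OF _ Wnn W]) (use li_quot_integrable(3) in auto)
  then show "(LINT t|lborel. W_T t * expdiv t) = 1 + (LBINT x=0..1. li (x - x\<^sup>2) / x)"
    using li_int by simp
qed

(* m(t) = 2 (e^-t - e^-2t) / t = int_1^2 2 e^-st ds  (lemma W_main_laplace_rep) *)
definition W_main :: "real \<Rightarrow> real" where
  "W_main t = (if 0 < t then 2 * (exp (- t) - exp (- 2 * t)) / t else 0)"

definition W_rest :: "real \<Rightarrow> real" where
  "W_rest t = W_T t / t - W_main t"

definition exp_taylor :: "nat \<Rightarrow> real \<Rightarrow> real" where
  "exp_taylor N t = (\<Sum>k<N. (- t)^k / fact k)"

lemma W_main_borel[measurable]: "W_main \<in> borel_measurable borel"
  unfolding W_main_def by measurable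

lemma W_rest_borel[measurable]: "W_rest \<in> borel_measurable borel"
  unfolding W_rest_def by measurable

lemma exp_taylor_borel[measurable]: "exp_taylor N \<in> borel_measurable borel"
  unfolding exp_taylor_def by measurable

lemma W_main_bounds: "0 \<le> W_main t" "W_main t \<le> 2"
proof -
  have "0 \<le> W_main t \<and> W_main t \<le> 2"
  proof (cases "0 < t")
    case True
    have e: "exp (- 2 * t) = exp (-t) * exp (-t)" by (simp add: exp_add[symmetric])
    have a: "exp (- t) \<le> 1" using True by simp
    have b: "1 - t \<le> exp (- t)" using exp_ge_add_one_self[of "-t"] by simp
    have "0 \<le> exp (- t) - exp (- 2 * t)" using a unfolding e by (simp add: mult_left_le)
    moreover have "exp (- t) - exp (- 2 * t) \<le> t"
    proof -
      have "exp (- t) - exp (- 2 * t) = exp (-t) * (1 - exp (-t))" unfolding e by (simp add: algebra_simps)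
      also have "\<dots> \<le> 1 * (1 - exp (-t))" using a by (intro mult_right_mono) auto
      finally show ?thesis using b by simp
    qed
    ultimately show ?thesis using True by (simp add: W_main_def divide_le_eq)
  qed (simp add: W_main_def)
  then show "0 \<le> W_main t" "W_main t \<le> 2" by auto
qed

lemma W_rest_bound: "\<bar>W_rest t\<bar> \<le> 48 * exp (- 2 * t)"
proof (cases "0 < t")
  case False
  then show ?thesis by (simp add: W_rest_def W_main_def W_T_def)
next
  case True
  have e: "exp (- 2 * t) = exp (-t)^2" by (simp add: exp_add[symmetric] power2_eq_square)
  show ?thesis
  proof (cases "1/4 \<le> exp (-t)")
    case True
    have "\<bar>W_rest t\<bar> \<le> 3" using W_T_div_bounds[of t] W_main_bounds[of t] by (simp add: W_rest_def)
    moreover have "(1/4)^2 \<le> exp (-t)^2" using True by (intro power_mono) auto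
    ultimately show ?thesis unfolding e by (simp add: power2_eq_square)
  next
    case nq: False
    have t1: "1 \<le> t"
    proof -
      have "ln (exp (-t)) < ln (1/4)" using nq by (subst ln_less_cancel_iff) auto
      then show ?thesis using ln_4_bounds(1) by (simp add: ln_div)
    qed
    have "W_rest t = (W_T t - 2 * exp (-t) + 2 * exp (- 2 * t)) / t"
      using True by (simp add: W_rest_def W_main_def diff_divide_distrib add_divide_distrib)
    also have "\<bar>\<dots>\<bar> \<le> \<bar>W_T t - 2 * exp (-t) + 2 * exp (- 2 * t)\<bar>"
      using t1 by (simp add: abs_div divide_le_eq mult_le_cancel_left1)
    also have "\<dots> \<le> 24 * exp (-t)^2 + 2 * exp (-t)^2"
      using W_T_asymptotics[OF True nq] unfolding e by simp
    finally show ?thesis unfolding e by simp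
  qed
qed

lemma exp_taylor_bound: "\<bar>exp_taylor N t\<bar> \<le> exp \<bar>t\<bar>"
proof -
  have "\<bar>exp_taylor N t\<bar> \<le> (\<Sum>k<N. \<bar>t\<bar>^k / fact k)"
    unfolding exp_taylor_def by (rule order.trans[OF sum_abs]) (simp add: abs_mult power_abs)
  also have "\<dots> \<le> (\<Sum>k. \<bar>t\<bar>^k / fact k)"
    using exp_converges[of "\<bar>t\<bar>"] by (intro sum_le_suminf) (auto simp: sums_iff divide_inverse mult.commute)
  also have "\<dots> = exp \<bar>t\<bar>"
    using exp_converges[of "\<bar>t\<bar>"] by (simp add: sums_iff divide_inverse mult.commute)
  finally show ?thesis .
qed

lemma exp_taylor_tendsto: "(\<lambda>N. exp_taylor N t) \<longlonglongrightarrow> exp (- t)"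
  using exp_converges[of "- t"] unfolding sums_def exp_taylor_def by (simp add: divide_inverse mult.commute)

(* The rest part of the remainder: |r(t)| |e_N(t) - e^-t| <= 48 e^-2t * 2 e^t, so dominated
   convergence applies. *)
lemma W_rest_remainder:
  shows "\<And>N. integrable lborel (\<lambda>t. W_rest t * (exp_taylor N t - exp (- t)))"
    and "(\<lambda>N. LINT t|lborel. W_rest t * (exp_taylor N t - exp (- t))) \<longlonglongrightarrow> 0"
proof -
  have bound: "\<bar>W_rest t * (exp_taylor N t - exp (- t))\<bar> \<le> 96 * (indicator {0..} t * t^0 * exp (- t))"
    for N t
  proof (cases "0 < t")
    case False then show ?thesis by (simp add: W_rest_def W_main_def W_T_def indicator_def)
  next
    case True
    have "\<bar>exp_taylor N t\<bar> \<le> exp t" using exp_taylor_bound[of N t] True by simp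
    moreover have "exp (- t) \<le> exp t" using True by simp
    moreover have "\<bar>exp_taylor N t - exp (- t)\<bar> \<le> \<bar>exp_taylor N t\<bar> + exp (- t)"
      using abs_triangle_ineq4[of "exp_taylor N t" "exp (- t)"] by simp
    ultimately have "\<bar>exp_taylor N t - exp (- t)\<bar> \<le> 2 * exp t" by linarith
    then have "\<bar>W_rest t\<bar> * \<bar>exp_taylor N t - exp (- t)\<bar> \<le> 48 * exp (- 2 * t) * (2 * exp t)"
      using W_rest_bound[of t] by (intro mult_mono) auto
    also have "48 * exp (- 2 * t) * (2 * exp t) = 96 * exp (- t)"
      by (simp add: mult_exp_exp[symmetric] exp_add[symmetric])
    finally show ?thesis using True by (simp add: indicator_def abs_mult)
  qed
  have lim: "AE t in lborel. (\<lambda>N. W_rest t * (exp_taylor N t - exp (- t))) \<longlonglongrightarrow> 0"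
    using tendsto_mult_right_zero[OF LIM_zero[OF exp_taylor_tendsto]] by simp
  have dom: "integrable lborel (\<lambda>t::real. 96 * (indicator {0..} t * t^0 * exp (- t)))"
    by (intro integrable_mult_right integrable_power_exp)
  show "\<And>N. integrable lborel (\<lambda>t. W_rest t * (exp_taylor N t - exp (- t)))"
    by (rule integrable_dominated_convergence2[OF _ _ dom lim]) (use bound in auto)
  have "(\<lambda>N. integral\<^sup>L lborel (\<lambda>t. W_rest t * (exp_taylor N t - exp (- t))))
          \<longlonglongrightarrow> integral\<^sup>L lborel (\<lambda>t::real. 0::real)"
    by (rule integral_dominated_convergence[OF _ _ dom lim]) (use bound in auto)
  then show "(\<lambda>N. LINT t|lborel. W_rest t * (exp_taylor N t - exp (- t))) \<longlonglongrightarrow> 0" by simp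
qed

lemma W_main_laplace_rep:
  assumes t: "0 < t"
  shows "(\<integral>\<^sup>+s. ennreal (2 * indicator {1..2} s * exp (- s * t)) \<partial>lborel) = ennreal (W_main t)"
proof -
  have "((\<lambda>s. exp (- s * t)) has_integral ((- exp (- 2 * t) / t) - (- exp (- 1 * t) / t))) {1..2}"
  proof (rule fundamental_theorem_of_calculus)
    fix s :: real assume "s \<in> {1..2}"
    show "((\<lambda>s. - exp (- s * t) / t) has_vector_derivative exp (- s * t)) (at s within {1..2})"
      using t by (auto intro!: derivative_eq_intros simp: has_real_derivative_iff_has_vector_derivative[symmetric] field_simps)
  qed simp
  then have "integral\<^sup>N lborel (\<lambda>s. indicator {1..2} s * exp (- s * t)) = ennreal ((exp (- t) - exp (- 2 * t)) / t)"
    by (subst nn_integral_has_integral_lebesgue) (auto simp: diff_divide_distrib)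
  then have A: "(\<integral>\<^sup>+s. ennreal 2 * ennreal (indicator {1..2} s * exp (- s * t)) \<partial>lborel) = ennreal 2 * ennreal ((exp (- t) - exp (- 2 * t)) / t)"
    by (subst nn_integral_cmult) auto
  have p: "ennreal (2 * indicator {1..2} s * exp (- s * t)) = ennreal 2 * ennreal (indicator {1..2} s * exp (- s * t))" for s
    by (subst ennreal_mult[symmetric]) (auto simp: mult.assoc)
  have "0 \<le> exp (- t) - exp (- 2 * t)" using t by simp
  then have m: "ennreal (W_main t) = ennreal 2 * ennreal ((exp (- t) - exp (- 2 * t)) / t)"
    using t by (subst ennreal_mult[symmetric]) (auto simp: W_main_def)
  show ?thesis unfolding p m A ..
qed

lemma W_main_tonelli:
  fixes \<phi> :: "real \<Rightarrow> real"
  assumes [measurable]: "\<phi> \<in> borel_measurable borel" and nn: "\<And>t. 0 \<le> \<phi> t"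
  shows "(\<integral>\<^sup>+t. ennreal (W_main t * \<phi> t) \<partial>lborel)
       = (\<integral>\<^sup>+s. ennreal (2 * indicator {1..2} s) * (\<integral>\<^sup>+t. ennreal (indicator {0<..} t * exp (- s * t) * \<phi> t) \<partial>lborel) \<partial>lborel)"
proof -
  define K where "K s t = ennreal (2 * indicator {1..2} s * (indicator {0<..} t * exp (- s * t) * \<phi> t))" for s t :: real
  have [measurable]: "case_prod K \<in> borel_measurable (lborel \<Otimes>\<^sub>M lborel)"
  proof -
    have "case_prod K = (\<lambda>z. ennreal (2 * (if 1 \<le> fst z \<and> fst z \<le> 2 then 1 else 0) *
       ((if 0 < snd z then 1 else 0) * exp (- fst z * snd z) * \<phi> (snd z))))"
      by (auto simp: K_def indicator_def fun_eq_iff)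
    also have "\<dots> \<in> borel_measurable (lborel \<Otimes>\<^sub>M lborel)" by measurable
    finally show ?thesis .
  qed
  have "(\<integral>\<^sup>+t. ennreal (W_main t * \<phi> t) \<partial>lborel) = (\<integral>\<^sup>+t. \<integral>\<^sup>+s. K s t \<partial>lborel \<partial>lborel)"
  proof (rule nn_integral_cong)
    fix t :: real
    show "ennreal (W_main t * \<phi> t) = (\<integral>\<^sup>+s. K s t \<partial>lborel)"
    proof (cases "0 < t")
      case True
      have "(\<integral>\<^sup>+s. K s t \<partial>lborel) = (\<integral>\<^sup>+s. ennreal (2 * indicator {1..2} s * exp (- s * t)) * ennreal (\<phi> t) \<partial>lborel)"
        using True nn by (intro nn_integral_cong) (simp add: K_def ennreal_mult''[symmetric] mult.assoc)
      also have "\<dots> = (\<integral>\<^sup>+s. ennreal (2 * indicator {1..2} s * exp (- s * t)) \<partial>lborel) * ennreal (\<phi> t)"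
        by (rule nn_integral_multc) auto
      also have "\<dots> = ennreal (W_main t) * ennreal (\<phi> t)"
        by (simp only: W_main_laplace_rep[OF True])
      finally show ?thesis using nn by (simp add: ennreal_mult'')
    qed (simp add: K_def W_main_def)
  qed
  also have "\<dots> = (\<integral>\<^sup>+s. \<integral>\<^sup>+t. K s t \<partial>lborel \<partial>lborel)"
    by (rule lborel_pair.Fubini') simp
  also have "\<dots> = (\<integral>\<^sup>+s. ennreal (2 * indicator {1..2} s) * (\<integral>\<^sup>+t. ennreal (indicator {0<..} t * exp (- s * t) * \<phi> t) \<partial>lborel) \<partial>lborel)"
    unfolding K_def by (intro nn_integral_cong) (subst nn_integral_cmult[symmetric]; auto simp: ennreal_mult')
  finally show ?thesis .
qed

lemma laplace_power:
  assumes s: "0 < s"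
  shows "(\<integral>\<^sup>+t. ennreal (indicator {0<..} t * exp (- s * t) * (\<bar>t\<bar>^k / fact k)) \<partial>lborel) = ennreal ((1/s)^(k+1))"
proof -
  have "AE t in lborel. ennreal (indicator {0<..} t * exp (- s * t) * (\<bar>t\<bar>^k / fact k))
      = ennreal (1 / fact k) * ennreal (indicator {0..} t * t^k * exp (- s * t))"
    using AE_lborel_singleton[of 0]
    by eventually_elim (auto simp: indicator_def ennreal_mult'[symmetric] mult_ac)
  then have "(\<integral>\<^sup>+t. ennreal (indicator {0<..} t * exp (- s * t) * (\<bar>t\<bar>^k / fact k)) \<partial>lborel)
      = ennreal (1 / fact k) * (\<integral>\<^sup>+t. ennreal (indicator {0..} t * t^k * exp (- s * t)) \<partial>lborel)"
    by (subst nn_integral_cong_AE) (auto intro: nn_integral_cmult)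
  also have "\<dots> = ennreal ((1/s)^(k+1))"
    using s by (simp only: nn_integral_power_exp[OF s]) (subst ennreal_mult'[symmetric]; auto simp: power_one_over)
  finally show ?thesis .
qed

lemma laplace_exp:
  assumes s: "0 < s"
  shows "(\<integral>\<^sup>+t. ennreal (indicator {0<..} t * exp (- s * t) * exp (- t)) \<partial>lborel) = ennreal (1/(s+1))"
proof -
  have "AE t in lborel. ennreal (indicator {0<..} t * exp (- s * t) * exp (- t))
      = ennreal (indicator {0..} t * t^0 * exp (- (s + 1) * t))"
    using AE_lborel_singleton[of 0]
    by eventually_elim (auto simp: indicator_def mult_exp_exp algebra_simps)
  then show ?thesis
    using nn_integral_power_exp[of "s + 1" 0] s by (subst nn_integral_cong_AE) auto
qed

lemma W_main_moment:
  fixes \<phi> L :: "real \<Rightarrow> real"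
  assumes [measurable]: "\<phi> \<in> borel_measurable borel" "L \<in> borel_measurable borel"
    and nn: "\<And>t. 0 \<le> \<phi> t"
    and lap: "\<And>s. s \<in> {1..2} \<Longrightarrow>
               (\<integral>\<^sup>+t. ennreal (indicator {0<..} t * exp (- s * t) * \<phi> t) \<partial>lborel) = ennreal (L s)"
    and L: "\<And>s. s \<in> {1..2} \<Longrightarrow> 0 \<le> L s \<and> L s \<le> 1"
  shows "integrable lborel (\<lambda>t. W_main t * \<phi> t)"
    and "(LINT t|lborel. W_main t * \<phi> t) = (LINT s|lborel. indicator {1..2} s * (2 * L s))"
proof -
  have Li: "integrable lborel (\<lambda>s. indicator {1..2} s * (2 * L s))"
    by (rule integrable_bounded_on_Icc[where B = 2]) (use L in force)+
  have eq: "(\<integral>\<^sup>+t. ennreal (W_main t * \<phi> t) \<partial>lborel)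
          = (\<integral>\<^sup>+s. ennreal (indicator {1..2} s * (2 * L s)) \<partial>lborel)"
    unfolding W_main_tonelli[OF assms(1) nn]
  proof (rule nn_integral_cong)
    fix s :: real
    show "ennreal (2 * indicator {1..2} s) * (\<integral>\<^sup>+t. ennreal (indicator {0<..} t * exp (- s * t) * \<phi> t) \<partial>lborel)
          = ennreal (indicator {1..2} s * (2 * L s))"
    proof (cases "s \<in> {1..2}")
      case True
      then show ?thesis using lap[OF True] L[OF True] by (simp add: ennreal_mult)
    qed auto
  qed
  have fn: "0 \<le> W_main t * \<phi> t" for t using W_main_bounds(1)[of t] nn[of t] by simp
  have gn: "0 \<le> indicator {1..2} s * (2 * L s)" for s using L[of s] by (auto simp: indicator_def)
  show "integrable lborel (\<lambda>t. W_main t * \<phi> t)"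
    by (rule integrable_integral_from_nn_integral_eq(1)[OF _ fn gn eq Li]) simp
  show "(LINT t|lborel. W_main t * \<phi> t) = (LINT s|lborel. indicator {1..2} s * (2 * L s))"
    by (rule integrable_integral_from_nn_integral_eq(2)[OF _ fn gn eq Li]) simp
qed

lemma W_main_power_moment:
  shows "integrable lborel (\<lambda>t. W_main t * (\<bar>t\<bar>^k / fact k))"
    and "(LINT t|lborel. W_main t * (\<bar>t\<bar>^k / fact k)) = (LINT s|lborel. indicator {1..2} s * (2 * (1/s)^(k+1)))"
proof -
  have m: "(\<lambda>t::real. \<bar>t\<bar>^k / fact k) \<in> borel_measurable borel" by measurable
  have mL: "(\<lambda>s::real. (1/s)^(k+1)) \<in> borel_measurable borel" by measurable
  have lap: "\<And>s. s \<in> {1..2} \<Longrightarrow> (\<integral>\<^sup>+t. ennreal (indicator {0<..} t * exp (- s * t) * (\<bar>t\<bar>^k / fact k)) \<partial>lborel)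
                 = ennreal ((1/s)^(k+1))"
    by (rule laplace_power) auto
  have L: "0 \<le> (1/s)^(k+1) \<and> (1/s)^(k+1) \<le> 1" if "s \<in> {1..2}" for s :: real
    using that by (intro conjI power_le_one) auto
  show "integrable lborel (\<lambda>t. W_main t * (\<bar>t\<bar>^k / fact k))"
    by (rule W_main_moment(1)[OF m mL _ lap L]) simp
  show "(LINT t|lborel. W_main t * (\<bar>t\<bar>^k / fact k)) = (LINT s|lborel. indicator {1..2} s * (2 * (1/s)^(k+1)))"
    by (rule W_main_moment(2)[OF m mL _ lap L]) simp
qed

lemma W_main_exp_moment:
  shows "integrable lborel (\<lambda>t. W_main t * exp (- t))"
    and "(LINT t|lborel. W_main t * exp (- t)) = (LINT s|lborel. indicator {1..2} s * (2 * (1/(s+1))))"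
proof -
  have mL: "(\<lambda>s::real. 1/(s+1)) \<in> borel_measurable borel" by measurable
  have lap: "\<And>s. s \<in> {1..2} \<Longrightarrow> (\<integral>\<^sup>+t. ennreal (indicator {0<..} t * exp (- s * t) * exp (- t)) \<partial>lborel)
                 = ennreal (1/(s+1))"
    by (rule laplace_exp) auto
  have L: "0 \<le> 1/(s+1) \<and> 1/(s+1) \<le> 1" if "s \<in> {1..2}" for s :: real
    using that by auto
  show "integrable lborel (\<lambda>t. W_main t * exp (- t))"
    by (rule W_main_moment(1)[OF _ mL _ lap L]) simp_all
  show "(LINT t|lborel. W_main t * exp (- t)) = (LINT s|lborel. indicator {1..2} s * (2 * (1/(s+1))))"
    by (rule W_main_moment(2)[OF _ mL _ lap L]) simp_all
qed

lemma alternating_geometric: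
  fixes s :: real assumes s: "1 \<le> s"
  shows "(\<Sum>k<N. (-1)^k * (1/s)^(k+1)) - 1/(s+1) = - ((-1/s)^N / (s+1))"
proof (induction N)
  case (Suc N)
  have "(\<Sum>k<Suc N. (-1)^k * (1/s)^(k+1)) - 1/(s+1) = - ((-1/s)^N / (s+1)) + (-1)^N * (1/s)^(N+1)"
    using Suc by simp
  also have "(-1)^N * (1/s)^(N+1) = (-1/s)^N * (1/s)"
    by (simp add: power_mult_distrib[symmetric] divide_inverse)
  also have "- ((-1/s)^N / (s+1)) + (-1/s)^N * (1/s) = - ((-1/s)^(Suc N) / (s+1))"
    using s by (simp add: field_simps)
  finally show ?case .
qed simp

(* m(t)(e_N(t) - e^-t) as a combination of the moments computed above (m vanishes for t <= 0). *)
lemma W_main_exp_taylor: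
  "W_main t * (exp_taylor N t - exp (- t))
     = (\<Sum>k<N. (-1)^k * (W_main t * (\<bar>t\<bar>^k / fact k))) - W_main t * exp (- t)"
proof (cases "0 < t")
  case True
  have "(-t)^k = (-1)^k * \<bar>t\<bar>^k" for k using True by (subst power_minus) simp
  then have "W_main t * exp_taylor N t = (\<Sum>k<N. (-1)^k * (W_main t * (\<bar>t\<bar>^k / fact k)))"
    unfolding exp_taylor_def sum_distrib_left by (intro sum.cong refl) (simp add: mult_ac)
  then show ?thesis by (simp add: right_diff_distrib)
qed (simp add: W_main_def)

lemma integral_lincomb_diff:
  fixes f :: "nat \<Rightarrow> real \<Rightarrow> real" and g :: "real \<Rightarrow> real"
  assumes fi: "\<And>k. integrable lborel (f k)" and gi: "integrable lborel g"
  shows "(LINT x|lborel. (\<Sum>k<N. c k * f k x) - g x) = (\<Sum>k<N. c k * integral\<^sup>L lborel (f k)) - integral\<^sup>L lborel g"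
proof -
  have "(LINT x|lborel. (\<Sum>k<N. c k * f k x) - g x) = (LINT x|lborel. (\<Sum>k<N. c k * f k x)) - integral\<^sup>L lborel g"
    by (intro Bochner_Integration.integral_diff Bochner_Integration.integrable_sum integrable_mult_right fi gi)
  also have "(LINT x|lborel. (\<Sum>k<N. c k * f k x)) = (\<Sum>k<N. c k * integral\<^sup>L lborel (f k))"
    by (subst Bochner_Integration.integral_sum) (auto intro: fi)
  finally show ?thesis .
qed

(* The main part of the remainder, computed exactly: by the Laplace representation and the
   alternating geometric sum it equals int_1^2 -2 (-1/s)^N/(s+1) ds. *)
lemma W_main_remainder_eq:
  "(LINT t|lborel. W_main t * (exp_taylor N t - exp (- t)))
     = (LINT s|lborel. indicator {1..2} s * (2 * (- ((-1/s)^N / (s+1)))))"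
proof -
  have gi: "integrable lborel (\<lambda>s::real. indicator {1..2} s * (2 * (1/s)^(k+1)))" for k
  proof (rule integrable_bounded_on_Icc[where B = 2])
    fix s :: real assume s: "s \<in> {1..2}"
    then have "(1/s)^(k+1) \<le> 1" by (intro power_le_one) auto
    moreover have "0 \<le> (1/s)^(k+1)" using s by simp
    ultimately show "\<bar>2 * (1/s)^(k+1)\<bar> \<le> 2" by (smt (verit))
  qed simp
  have gei: "integrable lborel (\<lambda>s::real. indicator {1..2} s * (2 * (1/(s+1))))"
  proof (rule integrable_bounded_on_Icc[where B = 2])
    fix s :: real assume "s \<in> {1..2}"
    then show "\<bar>2 * (1/(s+1))\<bar> \<le> 2" by (auto simp: divide_le_eq)
  qed simp
  have "(LINT t|lborel. W_main t * (exp_taylor N t - exp (- t)))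
      = (\<Sum>k<N. (-1)^k * (LINT t|lborel. W_main t * (\<bar>t\<bar>^k / fact k))) - (LINT t|lborel. W_main t * exp (- t))"
    unfolding W_main_exp_taylor
    by (rule integral_lincomb_diff[where f = "\<lambda>k t. W_main t * (\<bar>t\<bar>^k / fact k)" and g = "\<lambda>t. W_main t * exp (- t)",
          OF W_main_power_moment(1) W_main_exp_moment(1)])
  also have "\<dots> = (\<Sum>k<N. (-1)^k * (LINT s|lborel. indicator {1..2} s * (2 * (1/s)^(k+1))))
                   - (LINT s|lborel. indicator {1..2} s * (2 * (1/(s+1))))"
    by (simp only: W_main_power_moment(2) W_main_exp_moment(2))
  also have "\<dots> = (LINT s|lborel. (\<Sum>k<N. (-1)^k * (indicator {1..2} s * (2 * (1/s)^(k+1))))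
                   - indicator {1..2} s * (2 * (1/(s+1))))"
    by (rule integral_lincomb_diff[where f = "\<lambda>k s. indicator {1..2} s * (2 * (1/s)^(k+1))"
          and g = "\<lambda>s. indicator {1..2} s * (2 * (1/(s+1)))", OF gi gei, symmetric])
  also have "\<dots> = (LINT s|lborel. indicator {1..2} s * (2 * (- ((-1/s)^N / (s+1)))))"
  proof (rule Bochner_Integration.integral_cong)
    fix s :: real
    show "(\<Sum>k<N. (-1)^k * (indicator {1..2} s * (2 * (1/s)^(k+1)))) - indicator {1..2} s * (2 * (1/(s+1)))
          = indicator {1..2} s * (2 * (- ((-1/s)^N / (s+1))))"
    proof (cases "s \<in> {1..2}")
      case True
      then have "(\<Sum>k<N. (-1)^k * (indicator {1..2} s * (2 * (1/s)^(k+1)))) - indicator {1..2} s * (2 * (1/(s+1)))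
          = 2 * ((\<Sum>k<N. (-1)^k * (1/s)^(k+1)) - 1/(s+1))"
        by (simp add: sum_distrib_left right_diff_distrib mult_ac)
      then show ?thesis using True alternating_geometric[of s N] by simp
    qed simp
  qed simp
  finally show ?thesis .
qed

lemma W_main_remainder:
  shows "\<And>N. integrable lborel (\<lambda>t. W_main t * (exp_taylor N t - exp (- t)))"
    and "(\<lambda>N. LINT t|lborel. W_main t * (exp_taylor N t - exp (- t))) \<longlonglongrightarrow> 0"
proof -
  fix N
  show "integrable lborel (\<lambda>t. W_main t * (exp_taylor N t - exp (- t)))"
    unfolding W_main_exp_taylor
    by (intro Bochner_Integration.integrable_diff Bochner_Integration.integrable_sum integrable_mult_right
        W_main_power_moment W_main_exp_moment)
next
  define h where "h = (\<lambda>N (s::real). indicator {1..2} s * (2 * (- ((-1/s)^N / (s+1)))))"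
  have lim: "AE s in lborel. (\<lambda>N. h N s) \<longlonglongrightarrow> 0"
    using AE_lborel_singleton[of 1]
  proof eventually_elim
    case (elim s)
    show ?case
    proof (cases "s \<in> {1..2}")
      case True
      then have "norm (-1/s) < 1" using elim by (auto simp: abs_if divide_less_eq)
      then have "(\<lambda>N. (-1/s)^N) \<longlonglongrightarrow> 0" by (rule LIMSEQ_power_zero)
      then have "(\<lambda>N. 2 * (- ((-1/s)^N / (s+1)))) \<longlonglongrightarrow> 2 * (- (0 / (s+1)))"
        by (intro tendsto_mult tendsto_const tendsto_minus tendsto_divide) (use True in auto)
      then show ?thesis using True by (simp add: h_def)
    qed (simp add: h_def)
  qed
  have bnd: "AE s in lborel. norm (h N s) \<le> indicator {1..2} s * 2" for N
  proof (intro AE_I2)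
    fix s :: real
    show "norm (h N s) \<le> indicator {1..2} s * 2"
    proof (cases "s \<in> {1..2}")
      case True
      define X where "X = (-1/s)^N"
      have hx: "h N s = 2 * (- (X / (s+1)))" using True by (simp add: h_def X_def)
      have "\<bar>X\<bar> \<le> 1" unfolding X_def using True by (simp add: power_abs power_le_one)
      then have "\<bar>X\<bar> / (s+1) \<le> 1" using True by (simp add: divide_le_eq)
      moreover have "norm (h N s) = 2 * (\<bar>X\<bar> / (s+1))" unfolding hx using True by (simp add: abs_mult abs_div)
      moreover have "indicator {1..2} s * 2 = (2::real)" using True by simp
      ultimately show ?thesis by linarith
    qed (simp add: h_def)
  qed
  have wi: "integrable lborel (\<lambda>s::real. indicator {1..2} s * (2::real))"
    by (rule integrable_bounded_on_Icc[where B = 2]) auto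
  have "(\<lambda>N. integral\<^sup>L lborel (h N)) \<longlonglongrightarrow> integral\<^sup>L lborel (\<lambda>s::real. 0::real)"
    by (rule integral_dominated_convergence[OF _ _ wi lim bnd]) (auto simp: h_def)
  then show "(\<lambda>N. LINT t|lborel. W_main t * (exp_taylor N t - exp (- t))) \<longlonglongrightarrow> 0"
    by (simp add: W_main_remainder_eq h_def)
qed

lemma W_T_partial_sum:
  "(\<Sum>n<N. (-1)^n / fact (n+1) * (W_T t * t^n)) = (W_T t / t) * (1 - exp_taylor (Suc N) t)"
proof (cases "t = 0")
  case True then show ?thesis by (simp add: W_T_def)
next
  case False
  show ?thesis
  proof (induction N)
    case 0 then show ?case by (simp add: exp_taylor_def)
  next
    case (Suc N)
    have step: "(-1)^N / fact (N+1) * (W_T t * t^N) = - (W_T t / t) * ((- t)^(Suc N) / fact (Suc N))"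
    proof -
      have "(- t)^(Suc N) = - t * ((-1)^N * t^N)"
        by (simp only: power_Suc power_minus[of t N])
      then show ?thesis using False by (simp add: field_simps)
    qed
    have "(\<Sum>n<Suc N. (-1)^n / fact (n+1) * (W_T t * t^n))
        = (W_T t / t) * (1 - exp_taylor (Suc N) t) - (W_T t / t) * ((- t)^(Suc N) / fact (Suc N))"
      by (simp only: sum.lessThan_Suc Suc.IH step)
    also have "\<dots> = (W_T t / t) * (1 - exp_taylor (Suc (Suc N)) t)"
      by (simp add: exp_taylor_def algebra_simps)
    finally show ?case .
  qed
qed

(* The remainder int W_T(t)/t (e_N(t) - e^-t) dt tends to 0: split W_T/t = m + r. *)
lemma W_T_remainder:
  shows "\<And>N. integrable lborel (\<lambda>t. W_T t / t * (exp_taylor N t - exp (- t)))"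
    and "(\<lambda>N. LINT t|lborel. W_T t / t * (exp_taylor N t - exp (- t))) \<longlonglongrightarrow> 0"
proof -
  have split: "W_T t / t * (exp_taylor N t - exp (- t))
      = W_main t * (exp_taylor N t - exp (- t)) + W_rest t * (exp_taylor N t - exp (- t))" for N t
    by (simp add: W_rest_def algebra_simps)
  show "\<And>N. integrable lborel (\<lambda>t. W_T t / t * (exp_taylor N t - exp (- t)))"
    unfolding split by (intro Bochner_Integration.integrable_add W_main_remainder(1) W_rest_remainder(1))
  have "(\<lambda>N. (LINT t|lborel. W_main t * (exp_taylor N t - exp (- t)))
             + (LINT t|lborel. W_rest t * (exp_taylor N t - exp (- t)))) \<longlonglongrightarrow> 0 + 0"
    by (intro tendsto_add W_main_remainder(2) W_rest_remainder(2))
  then show "(\<lambda>N. LINT t|lborel. W_T t / t * (exp_taylor N t - exp (- t))) \<longlonglongrightarrow> 0"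
    unfolding split
    by (subst Bochner_Integration.integral_add[OF W_main_remainder(1) W_rest_remainder(1)]) simp
qed

lemma W_T_limit_integral:
  shows "integrable lborel (\<lambda>t. W_T t / t * (1 - exp (- t)))"
    and "(LINT t|lborel. W_T t / t * (1 - exp (- t))) = I_neg1 - (LBINT x=0..1. li (x - x\<^sup>2) / x) - 1"
proof -
  have eq: "W_T t / t * (1 - exp (- t)) = W_T t * (1 / t) - W_T t * expdiv t" for t
    by (cases "0 < t") (auto simp: W_T_def expdiv_def field_simps)
  show "integrable lborel (\<lambda>t. W_T t / t * (1 - exp (- t)))"
    unfolding eq by (intro Bochner_Integration.integrable_diff integrable_W_T_inverse W_T_expdiv_integral(2))
  show "(LINT t|lborel. W_T t / t * (1 - exp (- t))) = I_neg1 - (LBINT x=0..1. li (x - x\<^sup>2) / x) - 1"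
    unfolding eq Bochner_Integration.integral_diff[OF integrable_W_T_inverse W_T_expdiv_integral(2)]
    using I_neg1_moment(2) W_T_expdiv_integral(3) by simp
qed

lemma partial_sums:
  "(\<Sum>n<N. (-1) ^ n * I_n n / fact (n + 1))
     = (LINT t|lborel. W_T t / t * (1 - exp (- t)))
       - (LINT t|lborel. W_T t / t * (exp_taylor (Suc N) t - exp (- t)))"
proof -
  have "(\<Sum>n<N. (-1) ^ n * I_n n / fact (n + 1))
      = (\<Sum>n<N. LINT t|lborel. (-1)^n / fact (n+1) * (W_T t * t^n))"
    unfolding I_n_moment(2) by (intro sum.cong refl) simp
  also have "\<dots> = (LINT t|lborel. (\<Sum>n<N. (-1)^n / fact (n+1) * (W_T t * t^n)))"
    by (rule Bochner_Integration.integral_sum[symmetric]) (intro integrable_mult_right integrable_W_T_power)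
  also have "\<dots> = (LINT t|lborel. W_T t / t * (1 - exp (- t)) - W_T t / t * (exp_taylor (Suc N) t - exp (- t)))"
    unfolding W_T_partial_sum by (simp add: algebra_simps)
  also have "\<dots> = (LINT t|lborel. W_T t / t * (1 - exp (- t)))
                  - (LINT t|lborel. W_T t / t * (exp_taylor (Suc N) t - exp (- t)))"
    by (rule Bochner_Integration.integral_diff[OF W_T_limit_integral(1) W_T_remainder(1)])
  finally show ?thesis .
qed

theorem theorem4:
  shows "set_integrable lborel T_set f_neg1
       \<and> (\<forall>n. set_integrable lborel T_set (f_n n))
       \<and> interval_lebesgue_integrable lborel 0 1 (\<lambda>x. li (x - x\<^sup>2) / x)
       \<and> (\<lambda>n. (-1) ^ n * I_n n / fact (n + 1))
            sums (I_neg1 - (LBINT x=0..1. li (x - x\<^sup>2) / x) - 1)"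
proof (intro conjI allI)
  show "set_integrable lborel T_set f_neg1" by (rule I_neg1_moment(1))
  show "set_integrable lborel T_set (f_n n)" for n by (rule I_n_moment(1))
  show "interval_lebesgue_integrable lborel 0 1 (\<lambda>x. li (x - x\<^sup>2) / x)"
    by (rule W_T_expdiv_integral(1))
  have "(\<lambda>N. \<Sum>n<N. (-1) ^ n * I_n n / fact (n + 1))
          \<longlonglongrightarrow> (LINT t|lborel. W_T t / t * (1 - exp (- t))) - 0"
    unfolding partial_sums by (intro tendsto_diff tendsto_const LIMSEQ_Suc[OF W_T_remainder(2)])
  then show "(\<lambda>n. (-1) ^ n * I_n n / fact (n + 1)) sums (I_neg1 - (LBINT x=0..1. li (x - x\<^sup>2) / x) - 1)"
    unfolding sums_def W_T_limit_integral(2) by simp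
qed

end
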